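(* Thompson's groups $F$, $T$ and $V$ are intersection-saturated.
   Context: For an integer $n\geq 1$ write $[n]=\{1,\dots,n\}$. An $n$-configuration is a map $c\colon \mathcal{P}([n])\setminus\{\emptyset\}\to\{0,1\}$. An $n$-configuration $c$ is realisable in a group $G$ if there exist subgroups $H_1,\dots,H_n\leq G$ such that for every non-empty subset $I\subseteq[n]$, the subgroup $\bigcap_{i\in I}H_i$ is finitely generated if and only if $c(I)=0$. A group $G$ is intersection-saturated if for every $n\geq 1$, every $n$-configuration is realisable in $G$. *)

theory Defs
  imports "HOL-Analysis.Analysis" "HOL-Algebra.Algebra"
begin

definition fin_gen_subgroup :: "('a, 'b) monoid_scheme \<Rightarrow> 'a set \<Rightarrow> bool" where
  "fin_gen_subgroup G H \<longleftrightarrow> (\<exists>S. finite S \<and> S \<subseteq> carrier G \<and> H = generate G S)"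

text \<open>An n-configuration is a map from the nonempty subsets of {1..n} to {0,1};
  we represent it as a function on all sets of naturals, only its values on
  nonempty subsets of {1..n} being relevant.\<close>
definition configuration :: "nat \<Rightarrow> (nat set \<Rightarrow> nat) \<Rightarrow> bool" where
  "configuration n c \<longleftrightarrow> (\<forall>I. I \<noteq> {} \<and> I \<subseteq> {1..n} \<longrightarrow> c I \<in> {0, 1})"

definition realisable :: "('a, 'b) monoid_scheme \<Rightarrow> nat \<Rightarrow> (nat set \<Rightarrow> nat) \<Rightarrow> bool" where
  "realisable G n c \<longleftrightarrow>
     (\<exists>H :: nat \<Rightarrow> 'a set. (\<forall>i \<in> {1..n}. subgroup (H i) G) \<and>
        (\<forall>I. I \<noteq> {} \<and> I \<subseteq> {1..n} \<longrightarrow>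
             (fin_gen_subgroup G (\<Inter>i\<in>I. H i) \<longleftrightarrow> c I = 0)))"

definition intersection_saturated :: "('a, 'b) monoid_scheme \<Rightarrow> bool" where
  "intersection_saturated G \<longleftrightarrow>
     (\<forall>n \<ge> 1. \<forall>c. configuration n c \<longrightarrow> realisable G n c)"

definition dyadic :: "real \<Rightarrow> bool" where
  "dyadic x \<longleftrightarrow> (\<exists>(a::int) (k::nat). x = of_int a / 2 ^ k)"

text \<open>V: right-continuous bijections of [0,1) which are piecewise linear with finitely
  many dyadic breakpoints, slopes integral powers of 2, and mapping dyadics to dyadics
  (equivalently, dyadic intercepts). Outside [0,1) the maps are the identity, so that
  composition of functions is the group law.\<close>
definition thompsonV :: "(real \<Rightarrow> real) set" where
  "thompsonV = {f. bij_betw f {0..<1} {0..<1} \<and> (\<forall>x. x \<notin> {0..<1} \<longrightarrow> f x = x) \<and>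
     (\<exists>(n::nat) (a::nat \<Rightarrow> real) (k::nat \<Rightarrow> int) (b::nat \<Rightarrow> real).
        a 0 = 0 \<and> a n = 1 \<and>
        (\<forall>i<n. a i < a (Suc i) \<and> dyadic (a i) \<and> dyadic (b i)) \<and>
        (\<forall>i<n. \<forall>x \<in> {a i..<a (Suc i)}. f x = 2 powr (of_int (k i)) * x + b i))}"

definition thompsonF :: "(real \<Rightarrow> real) set" where
  "thompsonF = {f \<in> thompsonV. strict_mono_on {0..<1} f}"

text \<open>T: the elements inducing orientation-preserving homeomorphisms of the circle
  R/Z = [0,1), i.e. those which become increasing after post-composing with a rotation.\<close>
definition thompsonT :: "(real \<Rightarrow> real) set" where
  "thompsonT = {f \<in> thompsonV. \<exists>t. strict_mono_on {0..<1} (\<lambda>x. frac (f x + t))}"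

definition fun_group :: "(real \<Rightarrow> real) set \<Rightarrow> (real \<Rightarrow> real) monoid" where
  "fun_group S = \<lparr>carrier = S, mult = (\<circ>), one = id\<rparr>"

end

theory Submission
  imports Defs
begin

text \<open>
  Finite generation of a subgroup of F does not depend on whether F, T or V is the ambient group,
  and F contains the restricted direct sum of countably many copies of itself (the copies act on
  the dyadic intervals \<open>[1 - 2\<^sup>-\<^sup>m, 1 - 2\<^sup>-\<^sup>m\<^sup>-\<^sup>1)\<close>), so it suffices to realise every
  configuration in that direct sum.

  The building block is the subgroup B of F generated by the conjugates \<open>x0\<^sup>j a0 x0\<^sup>-\<^sup>j\<close>, where
  \<open>a0\<close> is \<open>x0\<close> squeezed into \<open>[1/4, 1/2)\<close>. These conjugates have disjoint supports between
  consecutive points of the \<open>x0\<close>-orbit of \<open>1/4\<close>, so B is not finitely generated, while B is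
  normalised by \<open>x0\<close> and \<open>b x0\<^sup>k\<close> determines both \<open>b \<in> B\<close> and \<open>k\<close>. For every set \<open>J\<close> with
  \<open>c J = 1\<close> a block of coordinates carries the tuples \<open>(b x0\<^sup>k, x0\<^sup>v\<^sup>l)\<close>, \<open>l \<in> J - {Max J}\<close>, and
  the i-th subgroup demands \<open>v i = 0\<close> for \<open>i < Max J\<close> and \<open>k = \<Sum> v l\<close> for \<open>i = Max J\<close>. In the
  intersection over \<open>I = J\<close> this forces \<open>k = 0\<close>, leaving a copy of B. For \<open>I \<subset> J\<close> an index
  \<open>l \<in> J - I\<close> leaves a free power of \<open>x0\<close> in position 0, which conjugates \<open>a0\<close> through all of B,
  so the intersection is finitely generated.
\<close>

section \<open>Finitely generated subgroups and realisability\<close>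

lemma fin_gen_subgroup_image:
  assumes "group_hom G H h" "Y \<subseteq> carrier G" "fin_gen_subgroup G Y"
  shows "fin_gen_subgroup H (h ` Y)"
proof -
  obtain S where S: "finite S" "S \<subseteq> carrier G" "Y = generate G S"
    using assms(3) unfolding fin_gen_subgroup_def by blast
  then have "h ` Y = generate H (h ` S)" using group_hom.generate_img[OF assms(1)] by simp
  moreover have "h ` S \<subseteq> carrier H" using S(2) group_hom.hom_closed[OF assms(1)] by auto
  ultimately show ?thesis unfolding fin_gen_subgroup_def using S(1) by blast
qed

lemma fin_gen_subgroup_image_iff:
  assumes hom: "group_hom G H h" and inj: "inj_on h (carrier G)" and Y: "Y \<subseteq> carrier G"
  shows "fin_gen_subgroup H (h ` Y) \<longleftrightarrow> fin_gen_subgroup G Y"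
proof
  assume "fin_gen_subgroup H (h ` Y)"
  then obtain T where T: "finite T" "T \<subseteq> carrier H" "h ` Y = generate H T"
    unfolding fin_gen_subgroup_def by blast
  then have "T \<subseteq> h ` Y" using generate.incl[of _ T H] by blast
  then obtain S where S: "S \<subseteq> Y" "T = h ` S" "finite S"
    using finite_subset_image[OF T(1)] by blast
  then have SG: "S \<subseteq> carrier G" using Y by auto
  then have "h ` generate G S = h ` Y" using group_hom.generate_img[OF hom] S(2) T(3) by simp
  moreover have "generate G S \<subseteq> carrier G" using group.generate_incl[OF group_hom.axioms(1)[OF hom] SG] .
  ultimately have "generate G S = Y" using inj Y by (simp add: inj_on_image_eq_iff)
  then show "fin_gen_subgroup G Y" unfolding fin_gen_subgroup_def using SG S(3) by blast
qed (rule fin_gen_subgroup_image[OF hom Y])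

lemma realisable_inj_hom:
  assumes hom: "group_hom G H h" and inj: "inj_on h (carrier G)" and "realisable G n c"
  shows "realisable H n c"
proof -
  obtain K where K: "\<forall>i\<in>{1..n}. subgroup (K i) G"
    "\<forall>I. I \<noteq> {} \<and> I \<subseteq> {1..n} \<longrightarrow> (fin_gen_subgroup G (\<Inter>i\<in>I. K i) \<longleftrightarrow> c I = 0)"
    using assms(3) unfolding realisable_def by blast
  have "fin_gen_subgroup H (\<Inter>i\<in>I. h ` K i) \<longleftrightarrow> c I = 0" if I: "I \<noteq> {}" "I \<subseteq> {1..n}" for I
  proof -
    have KG: "\<forall>i\<in>I. K i \<subseteq> carrier G" using K(1) I subgroup.subset by blast
    obtain i0 where "i0 \<in> I" using I by blast
    then have "(\<Inter>i\<in>I. K i) \<subseteq> carrier G" using KG by blast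
    moreover have "(\<Inter>i\<in>I. h ` K i) = h ` (\<Inter>i\<in>I. K i)"
      using image_INT[OF inj KG \<open>i0 \<in> I\<close>] by simp
    ultimately show ?thesis using fin_gen_subgroup_image_iff[OF hom inj] K(2) I by simp
  qed
  moreover have "subgroup (h ` K i) H" if "i \<in> {1..n}" for i
    using K(1) that group_hom.subgroup_img_is_subgroup[OF hom] by blast
  ultimately show ?thesis unfolding realisable_def by (intro exI[of _ "\<lambda>i. h ` K i"]) blast
qed

lemma (in group) generate_finite_support:
  assumes "x \<in> generate G A"
  shows "\<exists>A'. finite A' \<and> A' \<subseteq> A \<and> x \<in> generate G A'"
  using assms
proof induction
  case one
  show ?case by (intro exI[of _ "{}"]) (simp add: generate.one)
next
  case (incl h)
  then show ?case by (intro exI[of _ "{h}"]) (simp add: generate.incl)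
next
  case (inv h)
  then show ?case by (intro exI[of _ "{h}"]) (simp add: generate.inv)
next
  case (eng h1 h2)
  then obtain A1 A2 where A: "finite A1" "A1 \<subseteq> A" "h1 \<in> generate G A1"
    "finite A2" "A2 \<subseteq> A" "h2 \<in> generate G A2" by blast
  then have "h1 \<in> generate G (A1 \<union> A2)" "h2 \<in> generate G (A1 \<union> A2)"
    using mono_generate[of A1 "A1 \<union> A2"] mono_generate[of A2 "A1 \<union> A2"] by blast+
  then show ?case using A by (intro exI[of _ "A1 \<union> A2"]) (simp add: generate.eng)
qed

lemma (in group) finite_subset_generate_finite:
  assumes "finite S" "S \<subseteq> generate G A"
  shows "\<exists>A'. finite A' \<and> A' \<subseteq> A \<and> S \<subseteq> generate G A'"
  using assms
proof induction
  case (insert x S)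
  then obtain A1 A2 where A: "finite A1" "A1 \<subseteq> A" "S \<subseteq> generate G A1"
    "finite A2" "A2 \<subseteq> A" "x \<in> generate G A2"
    using generate_finite_support[of x A] by auto
  then have "insert x S \<subseteq> generate G (A1 \<union> A2)"
    using mono_generate[of A1 "A1 \<union> A2"] mono_generate[of A2 "A1 \<union> A2"] by blast
  then show ?case using A by (intro exI[of _ "A1 \<union> A2"]) simp
qed auto

lemma fun_group_simps [simp]:
  "carrier (fun_group S) = S" "x \<otimes>\<^bsub>fun_group S\<^esub> y = x \<circ> y" "\<one>\<^bsub>fun_group S\<^esub> = id"
  unfolding fun_group_def by simp_all

lemma inv_fun_group_mono:
  assumes G: "group (fun_group G)" and "G \<subseteq> S" "f \<in> G"
  shows "inv\<^bsub>fun_group S\<^esub> f = inv\<^bsub>fun_group G\<^esub> f"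
proof -
  interpret G: group "fun_group G" by (rule G)
  let ?h = "inv\<^bsub>fun_group G\<^esub> f"
  have h: "?h \<in> G" "f \<circ> ?h = id" "?h \<circ> f = id"
    using G.inv_closed G.r_inv G.l_inv \<open>f \<in> G\<close> by simp_all
  show ?thesis
    unfolding m_inv_def[of "fun_group S"]
  proof (rule the_equality)
    fix g assume "g \<in> carrier (fun_group S) \<and> f \<otimes>\<^bsub>fun_group S\<^esub> g = \<one>\<^bsub>fun_group S\<^esub> \<and>
      g \<otimes>\<^bsub>fun_group S\<^esub> f = \<one>\<^bsub>fun_group S\<^esub>"
    then have "g \<circ> f = id" by simp
    have "g = g \<circ> (f \<circ> ?h)" using h(2) by simp
    also have "\<dots> = (g \<circ> f) \<circ> ?h" by (simp only: comp_assoc)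
    finally show "g = ?h" using \<open>g \<circ> f = id\<close> by simp
  qed (use h \<open>G \<subseteq> S\<close> in auto)
qed

lemma subgroup_fun_group_mono:
  assumes G: "group (fun_group G)" and "G \<subseteq> S" and H: "subgroup H (fun_group G)"
  shows "subgroup H (fun_group S)"
proof
  have HG: "H \<subseteq> G" using subgroup.subset[OF H] by simp
  then show "H \<subseteq> carrier (fun_group S)" using \<open>G \<subseteq> S\<close> by simp
  show "x \<otimes>\<^bsub>fun_group S\<^esub> y \<in> H" if "x \<in> H" "y \<in> H" for x y
    using subgroup.m_closed[OF H that] by simp
  show "\<one>\<^bsub>fun_group S\<^esub> \<in> H" using subgroup.one_closed[OF H] by simp
  show "inv\<^bsub>fun_group S\<^esub> x \<in> H" if "x \<in> H" for x
    using subgroup.m_inv_closed[OF H that] inv_fun_group_mono[OF G \<open>G \<subseteq> S\<close>] HG that by auto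
qed

lemma generate_fun_group_mono:
  assumes G: "group (fun_group G)" and "G \<subseteq> S" "K \<subseteq> G"
  shows "generate (fun_group S) K = generate (fun_group G) K"
proof
  have inv: "inv\<^bsub>fun_group S\<^esub> h = inv\<^bsub>fun_group G\<^esub> h" if "h \<in> K" for h
    using inv_fun_group_mono[OF G \<open>G \<subseteq> S\<close>] that \<open>K \<subseteq> G\<close> by auto
  show "generate (fun_group S) K \<subseteq> generate (fun_group G) K"
  proof
    fix x assume "x \<in> generate (fun_group S) K"
    then show "x \<in> generate (fun_group G) K"
    proof induction
      case (eng h1 h2)
      then show ?case using generate.eng[of h1 "fun_group G" K h2] by (simp add: o_def)
    qed (use generate.one[of "fun_group G" K] inv generate.incl generate.inv in \<open>auto simp: id_def\<close>)
  qed
  show "generate (fun_group G) K \<subseteq> generate (fun_group S) K"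
  proof
    fix x assume "x \<in> generate (fun_group G) K"
    then show "x \<in> generate (fun_group S) K"
    proof induction
      case (eng h1 h2)
      then show ?case using generate.eng[of h1 "fun_group S" K h2] by (simp add: o_def)
    qed (use generate.one[of "fun_group S" K] generate.incl generate.inv in \<open>auto simp: id_def inv[symmetric]\<close>)
  qed
qed

lemma fin_gen_subgroup_fun_group_mono:
  assumes G: "group (fun_group G)" and "G \<subseteq> S" "H \<subseteq> G"
  shows "fin_gen_subgroup (fun_group S) H \<longleftrightarrow> fin_gen_subgroup (fun_group G) H"
proof -
  have "K \<subseteq> G" if "H = generate M K" for M K
    using that generate.incl[of _ K M] \<open>H \<subseteq> G\<close> by blast
  then show ?thesis
    unfolding fin_gen_subgroup_def using generate_fun_group_mono[OF G \<open>G \<subseteq> S\<close>] \<open>G \<subseteq> S\<close>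
    by (metis fun_group_simps(1) order_trans)
qed

lemma realisable_fun_group_mono:
  assumes G: "group (fun_group G)" and "G \<subseteq> S" and "realisable (fun_group G) n c"
  shows "realisable (fun_group S) n c"
proof -
  obtain H where H: "\<forall>i\<in>{1..n}. subgroup (H i) (fun_group G)"
    "\<forall>I. I \<noteq> {} \<and> I \<subseteq> {1..n} \<longrightarrow> (fin_gen_subgroup (fun_group G) (\<Inter>i\<in>I. H i) \<longleftrightarrow> c I = 0)"
    using assms(3) unfolding realisable_def by blast
  have "(\<Inter>i\<in>I. H i) \<subseteq> G" if "I \<noteq> {}" "I \<subseteq> {1..n}" for I
    using that H(1) subgroup.subset by fastforce
  then show ?thesis
    unfolding realisable_def using H subgroup_fun_group_mono[OF G \<open>G \<subseteq> S\<close>]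
      fin_gen_subgroup_fun_group_mono[OF G \<open>G \<subseteq> S\<close>] by (intro exI[of _ H]) auto
qed

lemma intersection_saturated_fun_group_mono:
  "group (fun_group G) \<Longrightarrow> G \<subseteq> S \<Longrightarrow> intersection_saturated (fun_group G) \<Longrightarrow>
    intersection_saturated (fun_group S)"
  unfolding intersection_saturated_def using realisable_fun_group_mono by blast

section \<open>Dyadic rationals and dyadic breakpoints\<close>

lemma dyadic_of_int [simp]: "dyadic (of_int a)"
  unfolding dyadic_def by (rule exI[of _ a], rule exI[of _ 0]) simp

lemma dyadic_0 [simp]: "dyadic 0" and dyadic_1 [simp]: "dyadic 1"
  using dyadic_of_int[of 0] dyadic_of_int[of 1] by simp_all

lemma dyadic_divide_pow2 [simp]: "dyadic (of_int a / 2 ^ k)"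
  unfolding dyadic_def by blast

lemma dyadic_add: assumes "dyadic x" "dyadic y" shows "dyadic (x + y)"
proof -
  obtain a k where x: "x = of_int a / 2 ^ k" using assms(1) unfolding dyadic_def by blast
  obtain c j where y: "y = of_int c / 2 ^ j" using assms(2) unfolding dyadic_def by blast
  have "x + y = of_int (a * 2 ^ j + c * 2 ^ k) / 2 ^ (k + j)"
    unfolding x y by (simp add: field_simps power_add)
  then show ?thesis unfolding dyadic_def by blast
qed

lemma dyadic_minus: assumes "dyadic x" shows "dyadic (- x)"
proof -
  obtain a k where "x = of_int a / 2 ^ k" using assms unfolding dyadic_def by blast
  then have "- x = of_int (- a) / 2 ^ k" by simp
  then show ?thesis unfolding dyadic_def by blast
qed

lemma dyadic_diff: "dyadic x \<Longrightarrow> dyadic y \<Longrightarrow> dyadic (x - y)"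
  using dyadic_add[of x "- y"] dyadic_minus[of y] by simp

lemma dyadic_mult: assumes "dyadic x" "dyadic y" shows "dyadic (x * y)"
proof -
  obtain a k where x: "x = of_int a / 2 ^ k" using assms(1) unfolding dyadic_def by blast
  obtain c j where y: "y = of_int c / 2 ^ j" using assms(2) unfolding dyadic_def by blast
  have "x * y = of_int (a * c) / 2 ^ (k + j)"
    unfolding x y by (simp add: field_simps power_add)
  then show ?thesis unfolding dyadic_def by blast
qed

lemma dyadic_powr2: "dyadic (2 powr of_int k)"
proof (cases "k \<ge> 0")
  case True
  then have "(2::real) powr of_int k = of_int (2 ^ nat k) / 2 ^ 0" by (simp add: powr_int)
  then show ?thesis unfolding dyadic_def by blast
next
  case False
  then have "(2::real) powr of_int k = of_int 1 / 2 ^ nat (- k)" by (simp add: powr_int)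
  then show ?thesis unfolding dyadic_def by blast
qed

lemma dyadic_affine: "dyadic x \<Longrightarrow> dyadic b \<Longrightarrow> dyadic (2 powr of_int k * x + b)"
  by (intro dyadic_add dyadic_mult dyadic_powr2)

lemma dyadic_affine_cancel:
  assumes "dyadic (2 powr of_int k * x + b)" "dyadic b" shows "dyadic x"
proof -
  have "x = 2 powr of_int (- k) * (2 powr of_int k * x + b) + - (2 powr of_int (- k) * b)"
    by (simp add: algebra_simps powr_minus field_simps)
  then show ?thesis using assms by (metis dyadic_affine dyadic_minus dyadic_mult dyadic_powr2)
qed

definition dyadic_affine_on :: "(real \<Rightarrow> real) \<Rightarrow> real set \<Rightarrow> bool" where
  "dyadic_affine_on f S \<longleftrightarrow>
     (\<exists>k::int. \<exists>b. dyadic b \<and> (\<forall>x\<in>S. f x = 2 powr of_int k * x + b))"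

lemma dyadic_affine_on_subset: "dyadic_affine_on f S \<Longrightarrow> T \<subseteq> S \<Longrightarrow> dyadic_affine_on f T"
  unfolding dyadic_affine_on_def by blast

lemma dyadic_affine_on_comp:
  assumes "dyadic_affine_on g S" "dyadic_affine_on f T" "g ` S \<subseteq> T"
  shows "dyadic_affine_on (f \<circ> g) S"
proof -
  obtain k b where g: "dyadic b" "\<forall>x\<in>S. g x = 2 powr of_int k * x + b"
    using assms(1) unfolding dyadic_affine_on_def by blast
  obtain k' b' where f: "dyadic b'" "\<forall>y\<in>T. f y = 2 powr of_int k' * y + b'"
    using assms(2) unfolding dyadic_affine_on_def by blast
  have "(f \<circ> g) x = 2 powr of_int (k' + k) * x + (2 powr of_int k' * b + b')" if "x \<in> S" for x
    using that g(2) f(2) assms(3) by (auto simp: powr_add algebra_simps)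
  moreover have "dyadic (2 powr of_int k' * b + b')" using g f by (simp add: dyadic_affine)
  ultimately show ?thesis unfolding dyadic_affine_on_def by blast
qed

lemma dyadic_affine_on_inverse:
  assumes "dyadic_affine_on f S" "\<And>y. y \<in> T \<Longrightarrow> h y \<in> S \<and> f (h y) = y"
  shows "dyadic_affine_on h T"
proof -
  obtain k b where kb: "dyadic b" "\<forall>x\<in>S. f x = 2 powr of_int k * x + b"
    using assms(1) unfolding dyadic_affine_on_def by blast
  have inv: "2 powr of_int (- k) * 2 powr of_int k = (1::real)"
    by (simp add: powr_add[symmetric])
  have "h y = 2 powr of_int (- k) * y + - (2 powr of_int (- k) * b)" if "y \<in> T" for y
  proof -
    have "y = 2 powr of_int k * h y + b" using assms(2)[OF that] kb(2) by metis
    then have "2 powr of_int (- k) * y = 2 powr of_int (- k) * (2 powr of_int k * h y + b)"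
      by (rule arg_cong)
    also have "\<dots> = (2 powr of_int (- k) * 2 powr of_int k) * h y + 2 powr of_int (- k) * b"
      by (simp only: distrib_left mult.assoc)
    finally show ?thesis unfolding inv by simp
  qed
  moreover have "dyadic (- (2 powr of_int (- k) * b))"
    by (intro dyadic_minus dyadic_mult dyadic_powr2 kb(1))
  ultimately show ?thesis unfolding dyadic_affine_on_def by blast
qed

definition consecutive :: "real set \<Rightarrow> real \<Rightarrow> real \<Rightarrow> bool" where
  "consecutive P p q \<longleftrightarrow> p \<in> P \<and> q \<in> P \<and> p < q \<and> (\<forall>r\<in>P. r \<le> p \<or> q \<le> r)"

lemma consecutive_around:
  assumes "finite P" "P \<subseteq> {0..1}" "0 \<in> P" "1 \<in> P" "x \<in> {0..<1}"
  obtains p q where "consecutive P p q" "p \<le> x" "x < q"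
proof -
  let ?L = "{r\<in>P. r \<le> x}" and ?U = "{r\<in>P. x < r}"
  have L: "finite ?L" "?L \<noteq> {}" and U: "finite ?U" "?U \<noteq> {}" using assms by auto
  have "consecutive P (Max ?L) (Min ?U)"
    unfolding consecutive_def using Max_in[OF L] Min_in[OF U] Max_ge[OF L(1)] Min_le[OF U(1)]
    by (smt (verit) mem_Collect_eq)
  then show ?thesis using that Max_in[OF L] Min_in[OF U] by blast
qed

lemma consecutive_image_iff:
  assumes "\<And>x y. h x < h y \<longleftrightarrow> x < y"
  shows "consecutive (h ` P) (h p) (h q) \<longleftrightarrow> consecutive P p q"
proof -
  have "h x = h y \<longleftrightarrow> x = y" for x y using assms by (metis less_irrefl linorder_neqE)
  then show ?thesis unfolding consecutive_def using assms by (auto simp: not_less[symmetric])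
qed

definition dyadic_breakpoints :: "real set \<Rightarrow> (real \<Rightarrow> real) \<Rightarrow> bool" where
  "dyadic_breakpoints P f \<longleftrightarrow>
     finite P \<and> P \<subseteq> {0..1} \<and> 0 \<in> P \<and> 1 \<in> P \<and> (\<forall>p\<in>P. dyadic p) \<and>
     (\<forall>p q. consecutive P p q \<longrightarrow> dyadic_affine_on f {p..<q})"

lemma consecutive_refine:
  assumes "finite P" "0 \<in> P" "1 \<in> P" "P \<subseteq> Q" "Q \<subseteq> {0..1}" "consecutive Q p q"
  obtains p' q' where "consecutive P p' q'" "p' \<le> p" "q \<le> q'"
proof -
  have "p \<in> {0..<1}" using assms(5,6) unfolding consecutive_def by force
  then obtain p' q' where pq': "consecutive P p' q'" "p' \<le> p" "p < q'"
    using consecutive_around[of P p] assms by blast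
  then have "q \<le> q'" using assms(4,6) unfolding consecutive_def by force
  then show ?thesis using that pq' by blast
qed

lemma dyadic_breakpoints_refine:
  assumes "dyadic_breakpoints P f" "P \<subseteq> Q" "Q \<subseteq> {0..1}" "consecutive Q p q"
  shows "dyadic_affine_on f {p..<q}"
proof -
  obtain p' q' where "consecutive P p' q'" "p' \<le> p" "q \<le> q'"
    using consecutive_refine[OF _ _ _ assms(2-4)] assms(1) unfolding dyadic_breakpoints_def by blast
  then show ?thesis using assms(1) dyadic_affine_on_subset[of f "{p'..<q'}" "{p..<q}"]
    unfolding dyadic_breakpoints_def by auto
qed

lemma dyadic_breakpoints_at:
  assumes "dyadic_breakpoints P f" "x \<in> {0..<1}"
  obtains k b where "dyadic b" "f x = 2 powr of_int k * x + b"
proof -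
  obtain p q where "consecutive P p q" "p \<le> x" "x < q"
    using consecutive_around[of P x] assms unfolding dyadic_breakpoints_def by blast
  then show ?thesis
    using assms that unfolding dyadic_breakpoints_def dyadic_affine_on_def by fastforce
qed

lemma Suc_chain_less:
  fixes a :: "nat \<Rightarrow> real"
  assumes "\<forall>i<n. a i < a (Suc i)" "i < j" "j \<le> n"
  shows "a i < a j"
  using assms(2,3)
proof (induction j)
  case (Suc j)
  then show ?case using assms(1) by (cases "i = j") (auto intro: less_trans)
qed simp

lemma consecutive_chain_iff:
  fixes a :: "nat \<Rightarrow> real"
  assumes "\<forall>i<n. a i < a (Suc i)"
  shows "consecutive (a ` {..n}) p q \<longleftrightarrow> (\<exists>i<n. p = a i \<and> q = a (Suc i))"
proof
  have less: "a i < a j" if "i < j" "j \<le> n" for i j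
    using Suc_chain_less[OF assms that] .
  have le: "a i \<le> a j" if "i \<le> j" "j \<le> n" for i j
    using less[of i j] that by (cases "i = j") auto
  show "consecutive (a ` {..n}) p q" if ex: "\<exists>i<n. p = a i \<and> q = a (Suc i)"
  proof -
    obtain i where i: "i < n" "p = a i" "q = a (Suc i)" using ex by blast
    have "r \<le> p \<or> q \<le> r" if r: "r \<in> a ` {..n}" for r
    proof -
      obtain j where "j \<le> n" "r = a j" using r by auto
      then show ?thesis using i le[of j i] le[of "Suc i" j] by (cases "j \<le> i") auto
    qed
    then show ?thesis unfolding consecutive_def using i less[of i "Suc i"] by auto
  qed
  assume pq: "consecutive (a ` {..n}) p q"
  then obtain i j where ij: "i \<le> n" "j \<le> n" "p = a i" "q = a j"
    unfolding consecutive_def by auto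
  have "i < j" using pq ij le[of j i] unfolding consecutive_def by force
  moreover have "\<not> Suc i < j"
  proof
    assume "Suc i < j"
    then have "a (Suc i) \<in> a ` {..n}" "p < a (Suc i)" "a (Suc i) < q"
      using ij less[of i "Suc i"] less[of "Suc i" j] by auto
    then show False using pq unfolding consecutive_def by force
  qed
  ultimately have "j = Suc i" by simp
  then show "\<exists>i<n. p = a i \<and> q = a (Suc i)" using ij by (intro exI[of _ i]) simp
qed

lemma enumerate_unit_interval_partition:
  fixes P :: "real set"
  assumes "finite P" "P \<subseteq> {0..1}" "0 \<in> P" "1 \<in> P"
  obtains n a where "a 0 = 0" "a n = 1" "\<forall>i<n. a i < a (Suc i)" "P = a ` {..n}"
proof -
  define xs where "xs = sorted_list_of_set P"
  define n where "n = length xs - 1"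
  define a where "a i = xs ! i" for i
  have sx: "sorted_wrt (<) xs" and setx: "set xs = P" unfolding xs_def using assms(1) by simp_all
  have "card {0::real, 1} \<le> card P" using assms by (intro card_mono) auto
  then have L: "length xs = Suc n" "n > 0" unfolding xs_def n_def by simp_all
  have less: "a i < a j" if "i < j" "j \<le> n" for i j
    using sorted_wrt_nth_less[OF sx] that L unfolding a_def by simp
  have image: "a ` {..n} = P"
    using nth_image[of "length xs" xs] setx L unfolding a_def
    by (simp add: atLeast0LessThan lessThan_Suc_atMost)
  have bounds: "a 0 \<le> a i" "a i \<le> a n" if "i \<le> n" for i
    using less[of 0 i] less[of i n] that by (cases "i = 0"; cases "i = n"; simp)+
  have "0 \<in> a ` {..n}" "1 \<in> a ` {..n}" "a 0 \<in> P" "a n \<in> P"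
    using image assms(3,4) by auto
  then obtain i j where "i \<le> n" "0 = a i" "j \<le> n" "1 = a j" by blast
  then have "a 0 \<le> 0" "1 \<le> a n" using bounds by metis+
  moreover have "a 0 \<in> {0..1}" "a n \<in> {0..1}" using \<open>a 0 \<in> P\<close> \<open>a n \<in> P\<close> assms(2) by blast+
  ultimately show ?thesis using that[of a n] less image by auto
qed

lemma breakpoints_of_partition:
  assumes "a 0 = 0" "a n = 1"
    and "\<forall>i<n. a i < a (Suc i) \<and> dyadic (a i) \<and> dyadic (b i)"
    and "\<forall>i<n. \<forall>x \<in> {a i..<a (Suc i)}. f x = 2 powr (of_int (k i)) * x + b i"
  shows "dyadic_breakpoints (a ` {..n}) f"
proof -
  have chain: "\<forall>i<n. a i < a (Suc i)" using assms(3) by blast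
  have "a 0 \<le> a i" "a i \<le> a n" if "i \<le> n" for i
    using Suc_chain_less[OF chain, of 0 i] Suc_chain_less[OF chain, of i n] that
    by (cases "i = 0"; cases "i = n"; simp)+
  moreover have "dyadic (a i)" if "i \<le> n" for i using assms(2,3) that by (cases "i = n") auto
  moreover have "dyadic_affine_on f {p..<q}" if "consecutive (a ` {..n}) p q" for p q
    using that assms(3,4) unfolding consecutive_chain_iff[OF chain] dyadic_affine_on_def by blast
  ultimately show ?thesis
    unfolding dyadic_breakpoints_def using assms(1,2) by (auto simp: image_iff)
qed

lemma partition_of_breakpoints:
  assumes "dyadic_breakpoints P f"
  obtains n a k b where "a 0 = 0" "a n = 1"
    "\<forall>i<n. a i < a (Suc i) \<and> dyadic (a i) \<and> dyadic (b i)"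
    "\<forall>i<n. \<forall>x \<in> {a i..<a (Suc i)}. f x = 2 powr (of_int (k i)) * x + b i"
proof -
  obtain n a where a: "a 0 = 0" "a n = 1" "\<forall>i<n. a i < a (Suc i)" "P = a ` {..n}"
    using enumerate_unit_interval_partition assms unfolding dyadic_breakpoints_def by metis
  have "dyadic_affine_on f {a i..<a (Suc i)}" if "i < n" for i
    using assms that unfolding dyadic_breakpoints_def a(4) consecutive_chain_iff[OF a(3)] by blast
  then have "\<forall>i. \<exists>kb. i < n \<longrightarrow> dyadic (snd kb) \<and>
      (\<forall>x\<in>{a i..<a (Suc i)}. f x = 2 powr of_int (fst kb) * x + snd kb)"
    unfolding dyadic_affine_on_def by (metis fst_conv snd_conv)
  then obtain kb where kb: "\<And>i. i < n \<Longrightarrow> dyadic (snd (kb i)) \<and>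
      (\<forall>x\<in>{a i..<a (Suc i)}. f x = 2 powr of_int (fst (kb i)) * x + snd (kb i))"
    by metis
  have "dyadic (a i)" if "i < n" for i using assms that unfolding dyadic_breakpoints_def a(4) by simp
  then show ?thesis using that[of a n "\<lambda>i. snd (kb i)" "\<lambda>i. fst (kb i)"] a kb by auto
qed

section \<open>Thompson's group F\<close>

lemma thompsonF_iff:
  "f \<in> thompsonF \<longleftrightarrow>
     bij_betw f {0..<1} {0..<1} \<and> (\<forall>x. x \<notin> {0..<1} \<longrightarrow> f x = x) \<and>
     strict_mono_on {0..<1} f \<and> (\<exists>P. dyadic_breakpoints P f)"
  unfolding thompsonF_def thompsonV_def
  by (auto intro: breakpoints_of_partition elim!: partition_of_breakpoints)

lemma thompsonF_D:
  assumes "f \<in> thompsonF"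
  shows "bij_betw f {0..<1} {0..<1}" "\<And>x. x \<notin> {0..<1} \<Longrightarrow> f x = x"
    "strict_mono_on {0..<1} f" "\<exists>P. dyadic_breakpoints P f"
  using assms unfolding thompsonF_iff by auto

lemma thompsonF_maps_Ico: "f \<in> thompsonF \<Longrightarrow> x \<in> {0..<1} \<Longrightarrow> f x \<in> {0..<1}"
  using thompsonF_D(1) bij_betwE by blast

lemma thompsonF_strict_mono:
  assumes f: "f \<in> thompsonF" and "x < y"
  shows "f x < f y"
  using strict_mono_onD[OF thompsonF_D(3)[OF f], of x y] thompsonF_maps_Ico[OF f, of x]
    thompsonF_maps_Ico[OF f, of y] thompsonF_D(2)[OF f, of x] thompsonF_D(2)[OF f, of y] \<open>x < y\<close>
  by (cases "x \<in> {0..<1}"; cases "y \<in> {0..<1}") auto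

lemma thompsonF_less_iff: "f \<in> thompsonF \<Longrightarrow> f x < f y \<longleftrightarrow> x < y"
  by (metis thompsonF_strict_mono not_less_iff_gr_or_eq order_less_imp_not_less)

lemma thompsonF_le_iff: "f \<in> thompsonF \<Longrightarrow> f x \<le> f y \<longleftrightarrow> x \<le> y"
  by (meson thompsonF_less_iff not_less)

lemma thompsonF_inj: "f \<in> thompsonF \<Longrightarrow> inj f"
  by (metis thompsonF_less_iff injI not_less_iff_gr_or_eq)

lemma thompsonF_surj:
  assumes "f \<in> thompsonF" shows "surj f"
proof -
  have "y \<in> range f" for y
    using thompsonF_D(2)[OF assms, of y] bij_betw_imp_surj_on[OF thompsonF_D(1)[OF assms]]
    by (cases "y \<in> {0..<1}") (blast, metis rangeI)
  then show ?thesis by auto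
qed

lemma thompsonF_bij: "f \<in> thompsonF \<Longrightarrow> bij f"
  by (simp add: bij_def thompsonF_inj thompsonF_surj)

lemma thompsonF_0 [simp]:
  assumes "f \<in> thompsonF" shows "f 0 = 0"
proof -
  obtain z where "z \<in> {0..<1}" "f z = 0"
    using bij_betw_imp_surj_on[OF thompsonF_D(1)[OF assms]] by (metis atLeastLessThan_iff imageE
        order.refl zero_less_one)
  then show ?thesis
    using thompsonF_maps_Ico[OF assms, of 0] thompsonF_le_iff[OF assms, of 0 z] by auto
qed

lemma thompsonF_1 [simp]: "f \<in> thompsonF \<Longrightarrow> f 1 = 1"
  by (rule thompsonF_D(2)) auto

lemma thompsonF_mem_Ico_iff: "f \<in> thompsonF \<Longrightarrow> f x \<in> {0..<1} \<longleftrightarrow> x \<in> {0..<1}"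
  by (metis atLeastLessThan_iff thompsonF_0 thompsonF_1 thompsonF_le_iff thompsonF_less_iff)

lemma thompsonF_mem_Icc_iff: "f \<in> thompsonF \<Longrightarrow> f x \<in> {0..1} \<longleftrightarrow> x \<in> {0..1}"
  by (metis atLeastAtMost_iff thompsonF_0 thompsonF_1 thompsonF_le_iff)

lemma id_thompsonF: "id \<in> thompsonF"
proof -
  have "dyadic_breakpoints {0, 1} id"
    unfolding dyadic_breakpoints_def consecutive_def dyadic_affine_on_def
    by (auto intro!: exI[of _ 0] exI[of _ 0])
  then show ?thesis unfolding thompsonF_iff by (auto simp: strict_mono_on_def)
qed

lemma thompsonF_dyadic_iff:
  assumes "f \<in> thompsonF" shows "dyadic (f x) \<longleftrightarrow> dyadic x"
proof (cases "x \<in> {0..<1}")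
  case True
  obtain P where "dyadic_breakpoints P f" using thompsonF_D(4)[OF assms] by blast
  then obtain k b where "dyadic b" "f x = 2 powr of_int k * x + b"
    using dyadic_breakpoints_at True by blast
  then show ?thesis using dyadic_affine dyadic_affine_cancel by metis
next
  case False
  then show ?thesis using thompsonF_D(2)[OF assms] by simp
qed

lemma dyadic_breakpoints_comp:
  assumes Pf: "dyadic_breakpoints Pf f" and g: "g \<in> thompsonF" and Pg: "dyadic_breakpoints Pg g"
  shows "dyadic_breakpoints (Pg \<union> {x \<in> {0..1}. g x \<in> Pf}) (f \<circ> g)"
proof -
  define Q where "Q = Pg \<union> {x \<in> {0..1}. g x \<in> Pf}"
  have "finite (g -` Pf)"
    using finite_vimageI[OF _ thompsonF_inj[OF g]] Pf unfolding dyadic_breakpoints_def by blast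
  then have finQ: "finite Q"
    using Pg unfolding Q_def dyadic_breakpoints_def by (auto intro: finite_subset)
  have PgQ: "Pg \<subseteq> Q" and Q01: "Q \<subseteq> {0..1}"
    using Pg unfolding Q_def dyadic_breakpoints_def by auto
  have Qdy: "\<forall>p\<in>Q. dyadic p"
    using Pg Pf thompsonF_dyadic_iff[OF g] unfolding Q_def dyadic_breakpoints_def by auto
  have affine: "dyadic_affine_on (f \<circ> g) {p..<q}" if pq: "consecutive Q p q" for p q
  proof -
    have "p \<in> {0..<1}" using pq Q01 unfolding consecutive_def by force
    then have "g p \<in> {0..<1}" using thompsonF_maps_Ico[OF g] by blast
    then obtain p' q' where pq': "consecutive Pf p' q'" "p' \<le> g p" "g p < q'"
      using consecutive_around[of Pf "g p"] Pf unfolding dyadic_breakpoints_def by blast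
    have "g x < q'" if x: "x \<in> {p..<q}" for x
    proof (rule ccontr)
      assume "\<not> g x < q'"
      have "q' \<in> {0..1}" using pq' Pf unfolding consecutive_def dyadic_breakpoints_def by auto
      then obtain y where y: "g y = q'" "y \<in> {0..1}"
        using thompsonF_surj[OF g] thompsonF_mem_Icc_iff[OF g] by (metis surjD)
      then have "y \<in> Q" using pq' unfolding Q_def consecutive_def by auto
      moreover have "p < y" "y \<le> x"
        using pq'(3) \<open>\<not> g x < q'\<close> y thompsonF_less_iff[OF g] thompsonF_le_iff[OF g] by auto
      ultimately show False using pq x unfolding consecutive_def by force
    qed
    then have "g ` {p..<q} \<subseteq> {p'..<q'}"
      using pq'(2) thompsonF_le_iff[OF g, of p] by (force intro: order_trans[of p' "g p"])
    moreover have "dyadic_affine_on f {p'..<q'}"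
      using pq'(1) Pf unfolding dyadic_breakpoints_def by blast
    ultimately show ?thesis
      using dyadic_affine_on_comp dyadic_breakpoints_refine[OF Pg PgQ Q01 pq] by blast
  qed
  show ?thesis
    unfolding Q_def[symmetric] dyadic_breakpoints_def
    using finQ Q01 Qdy affine PgQ Pg[unfolded dyadic_breakpoints_def] by auto
qed

lemma thompsonF_comp:
  assumes f: "f \<in> thompsonF" and g: "g \<in> thompsonF"
  shows "f \<circ> g \<in> thompsonF"
proof -
  obtain Pf Pg where "dyadic_breakpoints Pf f" "dyadic_breakpoints Pg g"
    using thompsonF_D(4) f g by metis
  then have "\<exists>P. dyadic_breakpoints P (f \<circ> g)" using dyadic_breakpoints_comp g by blast
  moreover have "bij_betw (f \<circ> g) {0..<1} {0..<1}"
    using bij_betw_trans thompsonF_D(1)[OF f] thompsonF_D(1)[OF g] by blast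
  moreover have "strict_mono_on {0..<1} (f \<circ> g)"
    using thompsonF_strict_mono[OF f] thompsonF_strict_mono[OF g] by (auto simp: strict_mono_on_def)
  ultimately show ?thesis unfolding thompsonF_iff using thompsonF_D(2)[OF f] thompsonF_D(2)[OF g] by simp
qed

text \<open>This is \<open>Hilbert_Choice.inv\<close>, which the group-inverse syntax of HOL-Algebra hides.\<close>

abbreviation fun_inv :: "('a \<Rightarrow> 'b) \<Rightarrow> 'b \<Rightarrow> 'a" where
  "fun_inv f \<equiv> inv_into UNIV f"

lemma thompsonF_inv_apply [simp]: "f \<in> thompsonF \<Longrightarrow> fun_inv f (f x) = x"
  using thompsonF_inj inv_into_f_f by (metis UNIV_I)

lemma thompsonF_apply_inv [simp]: "f \<in> thompsonF \<Longrightarrow> f (fun_inv f y) = y"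
  using thompsonF_surj f_inv_into_f by (metis UNIV_I)

lemma dyadic_breakpoints_inv:
  assumes f: "f \<in> thompsonF" and P: "dyadic_breakpoints P f"
  shows "dyadic_breakpoints (f ` P) (fun_inv f)"
proof -
  have affine: "dyadic_affine_on (fun_inv f) {p..<q}" if pq: "consecutive (f ` P) p q" for p q
  proof -
    obtain p0 q0 where pq0: "p = f p0" "q = f q0" using pq unfolding consecutive_def by auto
    then have "consecutive P p0 q0"
      using pq consecutive_image_iff[of f P p0 q0] thompsonF_less_iff[OF f] by simp
    then have "dyadic_affine_on f {p0..<q0}" using P unfolding dyadic_breakpoints_def by blast
    moreover have "fun_inv f y \<in> {p0..<q0}" if "y \<in> {p..<q}" for y
      using that pq0 thompsonF_le_iff[OF f, of p0 "fun_inv f y"]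
        thompsonF_less_iff[OF f, of "fun_inv f y" q0] f by simp
    ultimately show ?thesis using dyadic_affine_on_inverse f by force
  qed
  have "f ` P \<subseteq> {0..1}" "\<forall>p\<in>f ` P. dyadic p"
    using P thompsonF_mem_Icc_iff[OF f] thompsonF_dyadic_iff[OF f]
    unfolding dyadic_breakpoints_def by auto
  moreover have "0 \<in> f ` P" "1 \<in> f ` P"
    using P thompsonF_0[OF f] thompsonF_1[OF f] unfolding dyadic_breakpoints_def by force+
  ultimately show ?thesis using P affine unfolding dyadic_breakpoints_def by blast
qed

lemma thompsonF_inv:
  assumes f: "f \<in> thompsonF" shows "fun_inv f \<in> thompsonF"
proof -
  obtain P where "dyadic_breakpoints P f" using thompsonF_D(4)[OF f] by blast
  then have "\<exists>P. dyadic_breakpoints P (fun_inv f)" using dyadic_breakpoints_inv f by blast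
  moreover have "bij_betw (fun_inv f) {0..<1} {0..<1}"
  proof (rule bij_betw_byWitness[where f' = f])
    show "fun_inv f ` {0..<1} \<subseteq> {0..<1}"
      using thompsonF_mem_Ico_iff[OF f] f by (metis image_subsetI thompsonF_apply_inv)
    show "f ` {0..<1} \<subseteq> {0..<1}" using thompsonF_maps_Ico[OF f] by blast
  qed (use f in simp_all)
  moreover have "strict_mono_on {0..<1} (fun_inv f)"
    unfolding strict_mono_on_def
    using thompsonF_less_iff[OF f, of "fun_inv f _" "fun_inv f _"] f by simp
  moreover have "fun_inv f x = x" if "x \<notin> {0..<1}" for x
    using thompsonF_inv_apply[OF f, of x] thompsonF_D(2)[OF f that] by simp
  ultimately show ?thesis unfolding thompsonF_iff by blast
qed

abbreviation groupF :: "(real \<Rightarrow> real) monoid" where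
  "groupF \<equiv> fun_group thompsonF"

lemma group_groupF: "group groupF"
proof (rule groupI)
  fix f assume "f \<in> carrier groupF"
  then show "\<exists>g\<in>carrier groupF. g \<otimes>\<^bsub>groupF\<^esub> f = \<one>\<^bsub>groupF\<^esub>"
    using thompsonF_inv by (intro bexI[of _ "fun_inv f"]) (auto simp: fun_eq_iff)
qed (auto simp: thompsonF_comp id_thompsonF comp_assoc)

interpretation groupF: group groupF by (rule group_groupF)

lemma inv_groupF [simp]: "f \<in> thompsonF \<Longrightarrow> inv\<^bsub>groupF\<^esub> f = fun_inv f"
  by (rule groupF.inv_equality) (auto simp: fun_eq_iff thompsonF_inv)

lemma subgroup_fixing: "subgroup {f \<in> thompsonF. \<forall>x\<in>A. f x = x} groupF"
proof
  show "\<one>\<^bsub>groupF\<^esub> \<in> {f \<in> thompsonF. \<forall>x\<in>A. f x = x}" using id_thompsonF by simp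
  show "f \<otimes>\<^bsub>groupF\<^esub> g \<in> {f \<in> thompsonF. \<forall>x\<in>A. f x = x}"
    if "f \<in> {f \<in> thompsonF. \<forall>x\<in>A. f x = x}" "g \<in> {f \<in> thompsonF. \<forall>x\<in>A. f x = x}" for f g
    using that thompsonF_comp by auto
  show "inv\<^bsub>groupF\<^esub> f \<in> {f \<in> thompsonF. \<forall>x\<in>A. f x = x}"
    if "f \<in> {f \<in> thompsonF. \<forall>x\<in>A. f x = x}" for f
  proof -
    have f: "f \<in> thompsonF" "\<forall>x\<in>A. f x = x" using that by auto
    then have "fun_inv f x = x" if "x \<in> A" for x
      using thompsonF_inv_apply[OF f(1), of x] that by simp
    then show ?thesis using f thompsonF_inv by simp
  qed
qed auto

lemma thompsonF_subset_thompsonT: "thompsonF \<subseteq> thompsonT"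
proof
  fix f assume f: "f \<in> thompsonF"
  have "frac (f x + 0) = f x" if "x \<in> {0..<1}" for x
    using thompsonF_maps_Ico[OF f that] by (simp add: frac_eq)
  then have "strict_mono_on {0..<1} (\<lambda>x. frac (f x + 0))"
    using thompsonF_strict_mono[OF f] by (auto simp: strict_mono_on_def)
  then show "f \<in> thompsonT" using f unfolding thompsonT_def thompsonF_def by blast
qed

lemma thompsonT_subset_thompsonV: "thompsonT \<subseteq> thompsonV"
  unfolding thompsonT_def by auto

section \<open>Squeezing an element of F into a dyadic interval\<close>

definition place :: "real \<Rightarrow> real \<Rightarrow> (real \<Rightarrow> real) \<Rightarrow> real \<Rightarrow> real" where
  "place c w g x = (if c \<le> x \<and> x < c + w then c + w * g ((x - c) / w) else x)"

lemma place_id [simp]: "place c w id = id"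
  unfolding place_def by (auto simp: fun_eq_iff)

lemma place_maps_interval:
  assumes "g \<in> thompsonF" "w > 0" "c \<le> x" "x < c + w"
  shows "c \<le> place c w g x \<and> place c w g x < c + w"
proof -
  have "(x - c) / w \<in> {0..<1}" using assms(2-4) by (auto simp: field_simps)
  then have "g ((x - c) / w) \<in> {0..<1}" using thompsonF_maps_Ico[OF assms(1)] by blast
  then show ?thesis using assms(2-4) unfolding place_def by (auto simp: field_simps)
qed

lemma place_comp:
  assumes "g \<in> thompsonF" "h \<in> thompsonF" "w > 0"
  shows "place c w g \<circ> place c w h = place c w (g \<circ> h)"
proof
  fix x
  show "(place c w g \<circ> place c w h) x = place c w (g \<circ> h) x"
    using place_maps_interval[OF assms(2,3), of c x] assms(3) unfolding place_def by auto
qed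

lemma place_strict_mono:
  assumes "g \<in> thompsonF" "w > 0" "x < y"
  shows "place c w g x < place c w g y"
proof (cases "c \<le> x \<and> x < c + w \<and> c \<le> y \<and> y < c + w")
  case True
  have "(x - c) / w < (y - c) / w" using assms(2,3) by (simp add: divide_strict_right_mono)
  then show ?thesis using True thompsonF_strict_mono[OF assms(1)] assms(2) unfolding place_def by auto
next
  case False
  then show ?thesis
    using place_maps_interval[OF assms(1,2), of c x] place_maps_interval[OF assms(1,2), of c y]
      assms(3) unfolding place_def by (smt (verit))
qed

lemma place_dyadic_affine_on:
  assumes g: "dyadic_affine_on g {p..<q}" and pq: "0 \<le> p" "q \<le> 1" and c: "dyadic c"
    and rs: "c + 2 powr of_int e * p \<le> r" "s \<le> c + 2 powr of_int e * q"
  shows "dyadic_affine_on (place c (2 powr of_int e) g) {r..<s}"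
proof -
  define w :: real where "w = 2 powr of_int e"
  have w: "w > 0" "dyadic w" unfolding w_def by (simp_all add: dyadic_powr2)
  obtain k b where kb: "dyadic b" "\<forall>y\<in>{p..<q}. g y = 2 powr of_int k * y + b"
    using g unfolding dyadic_affine_on_def by blast
  have "place c w g x = 2 powr of_int k * x + (c + w * b - 2 powr of_int k * c)"
    if x: "x \<in> {r..<s}" for x
  proof -
    have "c + w * p \<le> x" "x < c + w * q" using x rs[folded w_def] by auto
    moreover have "0 \<le> w * p" "w * q \<le> w" using pq w(1) mult_left_le[of q w] by simp_all
    ultimately have "c \<le> x \<and> x < c + w" by linarith
    moreover have "(x - c) / w \<in> {p..<q}"
      using \<open>c + w * p \<le> x\<close> \<open>x < c + w * q\<close> w(1) by (auto simp: field_simps)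
    ultimately show ?thesis using kb(2) w(1) unfolding place_def by (simp add: field_simps)
  qed
  moreover have "dyadic (c + w * b - 2 powr of_int k * c)"
    using kb(1) c w(2) by (intro dyadic_diff dyadic_add dyadic_mult dyadic_powr2)
  ultimately show ?thesis unfolding w_def[symmetric] dyadic_affine_on_def by blast
qed

lemma dyadic_breakpoints_place:
  assumes P: "dyadic_breakpoints P g" and c: "dyadic c" "0 \<le> c" and cw: "c + 2 powr of_int e \<le> 1"
  shows "dyadic_breakpoints ({0, 1} \<union> (\<lambda>y. c + 2 powr of_int e * y) ` P)
           (place c (2 powr of_int e) g)"
proof -
  define w :: real where "w = 2 powr of_int e"
  define L where "L y = c + w * y" for y
  define Q where "Q = {0, 1} \<union> L ` P"
  have w: "w > 0" "dyadic w" unfolding w_def by (simp_all add: dyadic_powr2)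
  have finP: "finite P" and P01: "P \<subseteq> {0..1}" and P0: "0 \<in> P" and P1: "1 \<in> P"
    and Pdy: "\<forall>p\<in>P. dyadic p" and Paff: "\<And>p q. consecutive P p q \<Longrightarrow> dyadic_affine_on g {p..<q}"
    using P unfolding dyadic_breakpoints_def by auto
  have c_in: "c \<in> Q" and cw_in: "c + w \<in> Q"
    using P0 P1 unfolding Q_def L_def by force+
  have "L p \<in> {0..1}" if "p \<in> P" for p
  proof -
    have "0 \<le> p" "p \<le> 1" using that P01 by auto
    then have "0 \<le> w * p" "w * p \<le> w" using w(1) mult_left_le[of p w] by auto
    then show ?thesis using c cw[folded w_def] unfolding L_def by auto
  qed
  then have Q01: "Q \<subseteq> {0..1}" unfolding Q_def by auto
  have Qdy: "\<forall>p\<in>Q. dyadic p"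
    using Pdy c(1) w(2) unfolding Q_def L_def by (auto intro: dyadic_add dyadic_mult)
  have affine: "dyadic_affine_on (place c w g) {r..<s}" if rs: "consecutive Q r s" for r s
  proof (cases "s \<le> c \<or> c + w \<le> r")
    case True
    then have "\<forall>x\<in>{r..<s}. place c w g x = 2 powr of_int 0 * x + 0" unfolding place_def by auto
    then show ?thesis unfolding dyadic_affine_on_def using dyadic_0 by blast
  next
    case False
    then have r: "c \<le> r" "r < c + w"
      using rs c_in cw_in unfolding consecutive_def by force+
    then have "(r - c) / w \<in> {0..<1}" using w(1) by (auto simp: field_simps)
    then obtain p q where pq: "consecutive P p q" "p \<le> (r - c) / w" "(r - c) / w < q"
      using consecutive_around[OF finP P01 P0 P1] by blast
    have "L q \<in> Q" "r < L q" using pq w(1) unfolding consecutive_def Q_def L_def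
      by (auto simp: field_simps)
    then have "s \<le> c + w * q" using rs unfolding consecutive_def L_def by force
    moreover have "c + w * p \<le> r" using pq(2) w(1) by (simp add: field_simps)
    moreover have "0 \<le> p" "q \<le> 1" using pq(1) P01 unfolding consecutive_def by auto
    ultimately show ?thesis
      using place_dyadic_affine_on[OF Paff[OF pq(1)] _ _ c(1)] unfolding w_def by blast
  qed
  show ?thesis
    unfolding w_def[symmetric] L_def[symmetric] Q_def[symmetric] dyadic_breakpoints_def
    using Q01 Qdy affine finP unfolding Q_def by auto
qed

lemma place_thompsonF:
  assumes g: "g \<in> thompsonF" and c: "dyadic c" "0 \<le> c" and cw: "c + 2 powr of_int e \<le> 1"
  shows "place c (2 powr of_int e) g \<in> thompsonF"
proof -
  define w :: real where "w = 2 powr of_int e"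
  have w: "w > 0" unfolding w_def by simp
  have outside: "place c w h x = x" if "x \<notin> {0..<1}" for h x
    using that c cw unfolding place_def w_def by auto
  have maps: "place c w h x \<in> {0..<1}" if "h \<in> thompsonF" "x \<in> {0..<1}" for h x
  proof (cases "c \<le> x \<and> x < c + w")
    case True
    then show ?thesis using place_maps_interval[OF that(1) w, of c x] c cw[folded w_def] by auto
  qed (use that(2) in \<open>auto simp: place_def\<close>)
  have cancel: "place c w h (place c w h' x) = x"
    if "h \<in> thompsonF" "h' \<in> thompsonF" "h \<circ> h' = id" for h h' x
    using place_comp[OF that(1,2) w, of c] that(3) by (metis comp_apply id_apply place_id)
  have "g \<circ> fun_inv g = id" "fun_inv g \<circ> g = id" using g by (simp_all add: fun_eq_iff)
  then have "bij_betw (place c w g) {0..<1} {0..<1}"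
    by (intro bij_betw_byWitness[where f' = "place c w (fun_inv g)"])
      (use cancel g thompsonF_inv[OF g] maps in auto)
  moreover have "strict_mono_on {0..<1} (place c w g)"
    using place_strict_mono[OF g w] by (auto simp: strict_mono_on_def)
  moreover obtain P where "dyadic_breakpoints P g" using thompsonF_D(4)[OF g] by blast
  ultimately show ?thesis
    unfolding thompsonF_iff using outside dyadic_breakpoints_place c cw unfolding w_def by blast
qed

section \<open>The subgroup B\<close>

definition x0 :: "real \<Rightarrow> real" where
  "x0 x = (if 0 \<le> x \<and> x < 1/4 then 2 * x else if 1/4 \<le> x \<and> x < 1/2 then x + 1/4
           else if 1/2 \<le> x \<and> x < 1 then x / 2 + 1/2 else x)"

lemma x0_thompsonF: "x0 \<in> thompsonF"
proof -
  define a :: "nat \<Rightarrow> real" where "a = (!) [0, 1/4, 1/2, 1]"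
  define k :: "nat \<Rightarrow> int" where "k = (!) [1, 0, -1]"
  define b :: "nat \<Rightarrow> real" where "b = (!) [0, 1/4, 1/2]"
  have i3: "i < 3 \<longleftrightarrow> i = 0 \<or> i = 1 \<or> i = 2" for i :: nat by auto
  have d: "dyadic (1/4)" "dyadic (1/2)"
    using dyadic_divide_pow2[of 1 2] dyadic_divide_pow2[of 1 1] by simp_all
  have "\<forall>i<3. a i < a (Suc i) \<and> dyadic (a i) \<and> dyadic (b i)"
    unfolding i3 a_def b_def using d by auto
  moreover have "\<forall>i<3. \<forall>x \<in> {a i..<a (Suc i)}. x0 x = 2 powr (of_int (k i)) * x + b i"
    unfolding i3 a_def b_def k_def x0_def by (auto simp: powr_minus)
  moreover have "bij_betw x0 {0..<1} {0..<1}"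
    by (rule bij_betw_byWitness[where f' = "\<lambda>y. if y < 1/2 then y / 2
        else if y < 3/4 then y - 1/4 else 2 * y - 1"]) (auto simp: x0_def field_simps)
  moreover have "strict_mono_on {0..<1} x0" unfolding strict_mono_on_def x0_def by auto
  moreover have "\<forall>x. x \<notin> {0..<1} \<longrightarrow> x0 x = x" unfolding x0_def by auto
  moreover have "a 0 = 0" "a 3 = 1" unfolding a_def by (simp_all add: numeral_3_eq_3)
  ultimately show ?thesis unfolding thompsonF_def thompsonV_def by blast
qed

definition a0 :: "real \<Rightarrow> real" where
  "a0 = place (1/4) (1/4) x0"

lemma a0_thompsonF: "a0 \<in> thompsonF"
proof -
  have e: "(2::real) powr of_int (-2) = 1/4" by (simp add: powr_minus)
  show ?thesis
    unfolding a0_def using place_thompsonF[OF x0_thompsonF, of "1/4" "-2"]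
      dyadic_divide_pow2[of 1 2] unfolding e by simp
qed

lemma a0_fixes: "x < 1/4 \<or> 1/2 \<le> x \<Longrightarrow> a0 x = x"
  unfolding a0_def place_def by auto

lemma a0_quarter [simp]: "a0 (1/4) = 1/4"
  unfolding a0_def place_def x0_def by auto

lemma a0_moves: "a0 (5/16) = 3/8"
  unfolding a0_def place_def x0_def by auto

definition x0_pow :: "int \<Rightarrow> real \<Rightarrow> real" where
  "x0_pow k = x0 [^]\<^bsub>groupF\<^esub> k"

lemma x0_pow_thompsonF [simp]: "x0_pow k \<in> thompsonF"
  unfolding x0_pow_def using groupF.int_pow_closed x0_thompsonF by simp

lemma x0_pow_add: "x0_pow (i + j) = x0_pow i \<circ> x0_pow j"
  unfolding x0_pow_def using groupF.int_pow_mult x0_thompsonF by simp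

lemma x0_pow_0 [simp]: "x0_pow 0 = id" and x0_pow_1 [simp]: "x0_pow 1 = x0"
  unfolding x0_pow_def using groupF.int_pow_1 x0_thompsonF by simp_all

lemma x0_pow_mult: "x0_pow k [^]\<^bsub>groupF\<^esub> (e::int) = x0_pow (k * e)"
  unfolding x0_pow_def using groupF.int_pow_pow x0_thompsonF by simp

lemma x0_pow_cancel [simp]: "x0_pow (- k) (x0_pow k x) = x" "x0_pow k (x0_pow (- k) x) = x"
  using fun_cong[OF x0_pow_add[of "- k" k]] fun_cong[OF x0_pow_add[of k "- k"]] by simp_all

lemma x0_pow_cancel_comp [simp]:
  "x0_pow (- k) \<circ> x0_pow k = id" "x0_pow k \<circ> x0_pow (- k) = id"
  "x0_pow (- k) \<circ> (x0_pow k \<circ> f) = f" "x0_pow k \<circ> (x0_pow (- k) \<circ> f) = f"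
  by (simp_all add: fun_eq_iff)

lemma x0_pow_uminus: "x0_pow (- k) = fun_inv (x0_pow k)"
  using inv_groupF[OF x0_pow_thompsonF[of k]] groupF.inv_equality[of "x0_pow (- k)" "x0_pow k"]
  by simp

definition x0_orbit :: "int \<Rightarrow> real" where
  "x0_orbit k = x0_pow k (1/4)"

lemma x0_pow_orbit: "x0_pow j (x0_orbit k) = x0_orbit (j + k)"
  unfolding x0_orbit_def by (simp add: x0_pow_add)

lemma x0_orbit_0 [simp]: "x0_orbit 0 = 1/4" and x0_orbit_1 [simp]: "x0_orbit 1 = 1/2"
  unfolding x0_orbit_def by (simp_all add: x0_def)

lemma x0_orbit_strict_mono:
  assumes "k < l" shows "x0_orbit k < x0_orbit l"
proof -
  have step: "x0_orbit k < x0_orbit (k + 1)" for k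
  proof -
    have "0 < x0_orbit k" "x0_orbit k < 1"
      unfolding x0_orbit_def using thompsonF_less_iff[OF x0_pow_thompsonF[of k], of 0 "1/4"]
        thompsonF_less_iff[OF x0_pow_thompsonF[of k], of "1/4" 1] by simp_all
    moreover have "x0_orbit (k + 1) = x0 (x0_orbit k)" using x0_pow_orbit[of 1 k] by (simp add: add.commute)
    ultimately show ?thesis by (simp add: x0_def)
  qed
  have "x0_orbit k < x0_orbit (k + 1 + int d)" for d
  proof (induction d)
    case (Suc d)
    have "k + 1 + int (Suc d) = (k + 1 + int d) + 1" by simp
    then show ?case using Suc.IH step[of "k + 1 + int d"] by simp
  qed (use step in simp)
  moreover have "l = k + 1 + int (nat (l - k - 1))" using assms by simp
  ultimately show "x0_orbit k < x0_orbit l" by metis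
qed

lemma x0_orbit_less_iff [simp]: "x0_orbit k < x0_orbit l \<longleftrightarrow> k < l"
  using x0_orbit_strict_mono[of k l] x0_orbit_strict_mono[of l k]
  by (cases k l rule: linorder_cases) auto

lemma x0_orbit_le_iff [simp]: "x0_orbit k \<le> x0_orbit l \<longleftrightarrow> k \<le> l"
  using x0_orbit_less_iff[of l k] by (simp only: not_less[symmetric])

lemma x0_orbit_inj: "x0_orbit k = x0_orbit l \<Longrightarrow> k = l"
  using x0_orbit_less_iff[of k l] x0_orbit_less_iff[of l k] by (cases k l rule: linorder_cases) auto

lemma x0_pow_inj: "x0_pow k = x0_pow l \<Longrightarrow> k = l"
  using x0_orbit_inj unfolding x0_orbit_def by metis

definition conj_x0 :: "int \<Rightarrow> (real \<Rightarrow> real) \<Rightarrow> real \<Rightarrow> real" where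
  "conj_x0 k f = x0_pow k \<circ> f \<circ> x0_pow (- k)"

lemma conj_x0_thompsonF: "f \<in> thompsonF \<Longrightarrow> conj_x0 k f \<in> thompsonF"
  unfolding conj_x0_def by (intro thompsonF_comp x0_pow_thompsonF)

lemma conj_x0_id [simp]: "conj_x0 k id = id"
  unfolding conj_x0_def by simp

lemma conj_x0_0 [simp]: "conj_x0 0 f = f"
  unfolding conj_x0_def by simp

lemma conj_x0_conj_x0: "conj_x0 k (conj_x0 j f) = conj_x0 (k + j) f"
proof -
  have "conj_x0 k (conj_x0 j f) = (x0_pow k \<circ> x0_pow j) \<circ> f \<circ> (x0_pow (- j) \<circ> x0_pow (- k))"
    unfolding conj_x0_def by (simp add: comp_assoc)
  also have "\<dots> = conj_x0 (k + j) f"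
    unfolding conj_x0_def x0_pow_add[symmetric] by (simp add: add.commute)
  finally show ?thesis .
qed

lemma conj_x0_hom: "group_hom groupF groupF (conj_x0 k)"
proof -
  have "conj_x0 k (f \<circ> g) = conj_x0 k f \<circ> conj_x0 k g" for f g
    unfolding conj_x0_def by (simp add: comp_assoc)
  then show ?thesis
    unfolding group_hom_def group_hom_axioms_def hom_def
    using group_groupF conj_x0_thompsonF by auto
qed

definition a_conj :: "int \<Rightarrow> real \<Rightarrow> real" where
  "a_conj j = conj_x0 j a0"

lemma a_conj_thompsonF: "a_conj j \<in> thompsonF"
  unfolding a_conj_def by (rule conj_x0_thompsonF[OF a0_thompsonF])

lemma a_conj_0 [simp]: "a_conj 0 = a0"
  unfolding a_conj_def by simp

lemma conj_x0_a_conj: "conj_x0 k (a_conj j) = a_conj (k + j)"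
  unfolding a_conj_def by (rule conj_x0_conj_x0)

lemma a_conj_fixes:
  assumes "x < x0_orbit j \<or> x0_orbit (j + 1) \<le> x"
  shows "a_conj j x = x"
proof -
  have "x0_pow (- j) x < x0_pow (- j) (x0_orbit j) \<or>
      x0_pow (- j) (x0_orbit (j + 1)) \<le> x0_pow (- j) x"
    using assms thompsonF_less_iff[of "x0_pow (- j)" x "x0_orbit j", OF x0_pow_thompsonF]
      thompsonF_le_iff[of "x0_pow (- j)" "x0_orbit (j + 1)" x, OF x0_pow_thompsonF] by blast
  then have "x0_pow (- j) x < 1/4 \<or> 1/2 \<le> x0_pow (- j) x" by (simp add: x0_pow_orbit)
  then show ?thesis unfolding a_conj_def conj_x0_def by (simp add: a0_fixes)
qed

lemma a_conj_fixes_orbit: "a_conj j (x0_orbit k) = x0_orbit k"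
proof -
  have "a0 (x0_orbit (- j + k)) = x0_orbit (- j + k)"
  proof (cases "- j + k = 0")
    case False
    then have "x0_orbit (- j + k) < x0_orbit 0 \<or> x0_orbit 1 \<le> x0_orbit (- j + k)"
      unfolding x0_orbit_less_iff x0_orbit_le_iff by linarith
    then show ?thesis by (simp add: a0_fixes)
  qed simp
  then show ?thesis unfolding a_conj_def conj_x0_def by (simp add: x0_pow_orbit)
qed

lemma a_conj_moves:
  "x0_orbit j \<le> x0_pow j (5/16)" "x0_pow j (5/16) < x0_orbit (j + 1)"
  "a_conj j (x0_pow j (5/16)) \<noteq> x0_pow j (5/16)"
proof -
  have orbit: "x0_orbit j = x0_pow j (1/4)" "x0_orbit (j + 1) = x0_pow j (1/2)"
    using x0_pow_orbit[of j 0] x0_pow_orbit[of j 1] by simp_all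
  show "x0_orbit j \<le> x0_pow j (5/16)" "x0_pow j (5/16) < x0_orbit (j + 1)"
    unfolding orbit using thompsonF_le_iff[of "x0_pow j" "1/4" "5/16", OF x0_pow_thompsonF]
      thompsonF_less_iff[of "x0_pow j" "5/16" "1/2", OF x0_pow_thompsonF] by simp_all
  have "a_conj j (x0_pow j (5/16)) = x0_pow j (3/8)"
    unfolding a_conj_def conj_x0_def by (simp only: comp_apply x0_pow_cancel(1) a0_moves)
  moreover have "x0_pow j (5/16) < x0_pow j (3/8)"
    using thompsonF_less_iff[of "x0_pow j" "5/16" "3/8", OF x0_pow_thompsonF] by simp
  ultimately show "a_conj j (x0_pow j (5/16)) \<noteq> x0_pow j (5/16)" by simp
qed

definition subgroupB :: "(real \<Rightarrow> real) set" where
  "subgroupB = generate groupF (range a_conj)"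

lemma range_a_conj_carrier: "range a_conj \<subseteq> carrier groupF"
  using a_conj_thompsonF by auto

lemma subgroupB_subgroup: "subgroup subgroupB groupF"
  unfolding subgroupB_def by (rule groupF.generate_is_subgroup[OF range_a_conj_carrier])

lemma subgroupB_thompsonF: "b \<in> subgroupB \<Longrightarrow> b \<in> thompsonF"
  using subgroup.subset[OF subgroupB_subgroup] by auto

lemma a_conj_subgroupB: "a_conj j \<in> subgroupB"
  unfolding subgroupB_def by (rule generate.incl) simp

lemma id_subgroupB: "id \<in> subgroupB"
  using subgroup.one_closed[OF subgroupB_subgroup] by simp

lemma conj_x0_subgroupB:
  assumes "b \<in> subgroupB" shows "conj_x0 k b \<in> subgroupB"
proof -
  have "conj_x0 k ` subgroupB = generate groupF (conj_x0 k ` range a_conj)"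
    unfolding subgroupB_def using group_hom.generate_img[OF conj_x0_hom range_a_conj_carrier] ..
  also have "\<dots> \<subseteq> subgroupB"
    unfolding subgroupB_def by (rule groupF.mono_generate) (auto simp: conj_x0_a_conj)
  finally show ?thesis using assms by blast
qed

lemma subgroupB_fixes_orbit:
  assumes "b \<in> subgroupB" shows "b (x0_orbit k) = x0_orbit k"
proof -
  have "subgroupB \<subseteq> {f \<in> thompsonF. \<forall>x\<in>range x0_orbit. f x = x}"
    unfolding subgroupB_def
    by (rule groupF.generate_subgroup_incl[OF _ subgroup_fixing])
      (auto simp: a_conj_thompsonF a_conj_fixes_orbit)
  then show ?thesis using assms by auto
qed

lemma subgroupB_x0_pow_eq_iff:
  assumes "b \<in> subgroupB" "b' \<in> subgroupB"
  shows "b \<circ> x0_pow k = b' \<circ> x0_pow k' \<longleftrightarrow> b = b' \<and> k = k'"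
proof
  assume eq: "b \<circ> x0_pow k = b' \<circ> x0_pow k'"
  have "x0_orbit k = b (x0_orbit k)" using subgroupB_fixes_orbit[OF assms(1)] by simp
  also have "\<dots> = b' (x0_orbit k')" using fun_cong[OF eq, of "1/4"] unfolding x0_orbit_def by simp
  also have "\<dots> = x0_orbit k'" using subgroupB_fixes_orbit[OF assms(2)] .
  finally have "k = k'" by (rule x0_orbit_inj)
  then have "b \<circ> x0_pow k \<circ> x0_pow (- k) = b' \<circ> x0_pow k \<circ> x0_pow (- k)" using eq by simp
  then show "b = b' \<and> k = k'" using \<open>k = k'\<close> by (simp add: comp_assoc)
qed simp

lemma subgroupB_not_fin_gen: "\<not> fin_gen_subgroup groupF subgroupB"
proof
  assume "fin_gen_subgroup groupF subgroupB"
  then obtain S where S: "finite S" "S \<subseteq> carrier groupF" "subgroupB = generate groupF S"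
    unfolding fin_gen_subgroup_def by blast
  have "S \<subseteq> subgroupB" unfolding S(3) by (auto intro: generate.incl)
  then have S_sub: "S \<subseteq> generate groupF (range a_conj)" unfolding subgroupB_def .
  obtain A where A: "finite A" "A \<subseteq> range a_conj" "S \<subseteq> generate groupF A"
    using groupF.finite_subset_generate_finite[OF S(1) S_sub] by blast
  then obtain J where J: "finite J" "A = a_conj ` J"
    using finite_subset_image[OF A(1,2)] by blast
  define N where "N = Max (insert 0 J)"
  let ?Fix = "{f \<in> thompsonF. \<forall>x\<in>{x0_orbit (N + 1)..<x0_orbit (N + 2)}. f x = x}"
  have "a_conj j \<in> ?Fix" if "j \<in> J" for j
  proof -
    have "j \<le> N" unfolding N_def using J(1) that by simp
    then have jN: "x0_orbit (j + 1) \<le> x0_orbit (N + 1)" by simp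
    have "a_conj j x = x" if "x \<in> {x0_orbit (N + 1)..<x0_orbit (N + 2)}" for x
      using that by (intro a_conj_fixes disjI2 order_trans[OF jN]) simp
    then show ?thesis using a_conj_thompsonF by blast
  qed
  then have "generate groupF A \<subseteq> ?Fix"
    unfolding J(2) by (intro groupF.generate_subgroup_incl[OF _ subgroup_fixing]) blast
  moreover have "generate groupF S \<subseteq> generate groupF A"
    using A(2,3) range_a_conj_carrier
    by (intro groupF.generate_subgroup_incl groupF.generate_is_subgroup) auto
  ultimately have "subgroupB \<subseteq> ?Fix" unfolding S(3) by (rule order_trans[rotated])
  then have "a_conj (N + 1) \<in> ?Fix" using a_conj_subgroupB by blast
  moreover have "x0_pow (N + 1) (5/16) \<in> {x0_orbit (N + 1)..<x0_orbit (N + 2)}"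
    using a_conj_moves(1,2)[of "N + 1"] by (simp add: add.assoc)
  ultimately show False using a_conj_moves(3)[of "N + 1"] by blast
qed

section \<open>The direct sum of countably many copies of F embeds into F\<close>

abbreviation sumF :: "(nat \<times> nat \<Rightarrow> real \<Rightarrow> real) monoid" where
  "sumF \<equiv> sum_group (UNIV :: (nat \<times> nat) set) (\<lambda>_. groupF)"

lemma group_sumF: "group sumF"
  by (rule sum_group) (rule group_groupF)

interpretation sumF: group sumF by (rule group_sumF)

lemma sumF_carrier: "carrier sumF = {\<phi>. (\<forall>q. \<phi> q \<in> thompsonF) \<and> finite {q. \<phi> q \<noteq> id}}"
  using carrier_sum_group[of "UNIV :: (nat \<times> nat) set" "\<lambda>_. groupF"] group_groupF
  by (auto simp: PiE_UNIV_domain Pi_def)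

lemma sumF_carrierI: "(\<And>q. \<phi> q \<in> thompsonF) \<Longrightarrow> finite {q. \<phi> q \<noteq> id} \<Longrightarrow> \<phi> \<in> carrier sumF"
  unfolding sumF_carrier by auto

lemma sumF_carrierD: "\<phi> \<in> carrier sumF \<Longrightarrow> \<phi> q \<in> thompsonF"
  unfolding sumF_carrier mem_Collect_eq by blast

lemma sumF_carrier_finite: "\<phi> \<in> carrier sumF \<Longrightarrow> finite {q. \<phi> q \<noteq> id}"
  unfolding sumF_carrier by auto

lemma sumF_mult: "\<phi> \<otimes>\<^bsub>sumF\<^esub> \<psi> = (\<lambda>q. \<phi> q \<circ> \<psi> q)"
  by (simp add: restrict_UNIV)

lemma sumF_one: "\<one>\<^bsub>sumF\<^esub> = (\<lambda>q. id)"
  by (simp add: restrict_UNIV)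

lemma sumF_inv: "\<phi> \<in> carrier sumF \<Longrightarrow> inv\<^bsub>sumF\<^esub> \<phi> = (\<lambda>q. fun_inv (\<phi> q))"
  using inv_sum_group[of "UNIV :: (nat \<times> nat) set" "\<lambda>_. groupF" \<phi>] group_groupF sumF_carrierD
  by (simp add: restrict_UNIV)

lemma sumF_coordinate_hom: "group_hom sumF groupF (\<lambda>\<phi>. \<phi> q)"
  unfolding group_hom_def group_hom_axioms_def hom_def
  using group_sumF group_groupF sumF_carrierD by auto

lemma sumF_int_pow: "\<phi> \<in> carrier sumF \<Longrightarrow> (\<phi> [^]\<^bsub>sumF\<^esub> (k::int)) q = \<phi> q [^]\<^bsub>groupF\<^esub> k"
  using group_hom.hom_int_pow[OF sumF_coordinate_hom] by blast

text \<open>Products and the unit of the direct sum are unfolded only on demand, by \<open>sumF_mult\<close>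
  and \<open>sumF_one\<close>; unfolded automatically they obstruct rewriting with the group laws.\<close>
declare mult_sum_group [simp del] one_sum_group [simp del]

definition single :: "nat \<times> nat \<Rightarrow> (real \<Rightarrow> real) \<Rightarrow> nat \<times> nat \<Rightarrow> real \<Rightarrow> real" where
  "single q0 g q = (if q = q0 then g else id)"

lemma single_carrier: "g \<in> thompsonF \<Longrightarrow> single q0 g \<in> carrier sumF"
proof (rule sumF_carrierI)
  show "g \<in> thompsonF \<Longrightarrow> single q0 g q \<in> thompsonF" for q
    unfolding single_def using id_thompsonF by auto
  have "{q. single q0 g q \<noteq> id} \<subseteq> {q0}" unfolding single_def by auto
  then show "finite {q. single q0 g q \<noteq> id}" using finite_subset by blast
qed

lemma single_hom: "group_hom groupF sumF (single q0)"
  unfolding group_hom_def group_hom_axioms_def hom_def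
  using group_groupF group_sumF single_carrier by (auto simp: single_def fun_eq_iff sumF_mult)

definition slot_start :: "nat \<Rightarrow> real" where
  "slot_start m = 1 - 1 / 2 ^ m"

definition slot_len :: "nat \<Rightarrow> real" where
  "slot_len m = 1 / 2 ^ Suc m"

lemma slot_start_Suc: "slot_start (Suc m) = slot_start m + slot_len m"
  unfolding slot_start_def slot_len_def by (simp add: field_simps)

lemma slot_len_pos: "slot_len m > 0"
  unfolding slot_len_def by simp

lemma slot_start_0 [simp]: "slot_start 0 = 0"
  unfolding slot_start_def by simp

lemma slot_start_bounds: "0 \<le> slot_start m" "slot_start m < 1"
  unfolding slot_start_def by simp_all

lemma slot_start_le_iff [simp]: "slot_start m \<le> slot_start n \<longleftrightarrow> m \<le> n"
  unfolding slot_start_def by (simp add: field_simps)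

lemma slot_start_less_iff [simp]: "slot_start m < slot_start n \<longleftrightarrow> m < n"
  unfolding slot_start_def by (simp add: field_simps)

definition slot_of :: "real \<Rightarrow> nat" where
  "slot_of x = (LEAST m. x < slot_start (Suc m))"

lemma slot_of:
  assumes "0 \<le> x" "x < 1"
  shows "slot_start (slot_of x) \<le> x" "x < slot_start (Suc (slot_of x))"
proof -
  obtain m where "(1/2::real) ^ m < 1 - x" using real_arch_pow_inv[of "1 - x" "1/2"] assms by auto
  then have "x < slot_start (Suc m)"
    unfolding slot_start_def by (simp add: power_one_over field_simps)
  then show "x < slot_start (Suc (slot_of x))"
    unfolding slot_of_def by (rule LeastI)
  show "slot_start (slot_of x) \<le> x"
  proof (cases "slot_of x")
    case (Suc m)
    then show ?thesis using not_less_Least[of m "\<lambda>m. x < slot_start (Suc m)"]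
      unfolding slot_of_def by auto
  qed (use assms in simp)
qed

lemma slot_of_eq:
  assumes "slot_start m \<le> x" "x < slot_start (Suc m)"
  shows "slot_of x = m"
proof -
  have "0 \<le> x" "x < 1" using assms slot_start_bounds[of m] slot_start_bounds[of "Suc m"] by linarith+
  from slot_of[OF this] assms show ?thesis
    by (metis le_less_trans linorder_neqE not_less_eq slot_start_less_iff)
qed

definition place_slot :: "nat \<Rightarrow> (real \<Rightarrow> real) \<Rightarrow> real \<Rightarrow> real" where
  "place_slot m g = place (slot_start m) (slot_len m) g"

lemma place_slot_fixes: "x < slot_start m \<or> slot_start (Suc m) \<le> x \<Longrightarrow> place_slot m g x = x"
  unfolding place_slot_def place_def slot_start_Suc by auto

lemma place_slot_maps_slot:
  assumes "g \<in> thompsonF" "slot_start m \<le> x" "x < slot_start (Suc m)"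
  shows "slot_start m \<le> place_slot m g x \<and> place_slot m g x < slot_start (Suc m)"
  using place_maps_interval[OF assms(1) slot_len_pos] assms(2,3)
  unfolding place_slot_def slot_start_Suc by blast

lemma place_slot_thompsonF:
  assumes "g \<in> thompsonF" shows "place_slot m g \<in> thompsonF"
proof -
  have "slot_start m = of_int (2 ^ m - 1) / 2 ^ m" unfolding slot_start_def by (simp add: field_simps)
  then have "dyadic (slot_start m)" unfolding dyadic_def by blast
  moreover have len: "slot_len m = 2 powr of_int (- int (Suc m))"
    unfolding slot_len_def by (subst powr_int) (auto simp: nat_add_distrib)
  moreover have "slot_start m + slot_len m \<le> 1"
    using slot_start_bounds(2)[of "Suc m"] slot_start_Suc[of m] by simp
  ultimately show ?thesis
    unfolding place_slot_def len using place_thompsonF[OF assms _ slot_start_bounds(1)] by blast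
qed

definition glue :: "(nat \<times> nat \<Rightarrow> real \<Rightarrow> real) \<Rightarrow> real \<Rightarrow> real" where
  "glue \<phi> x = (if 0 \<le> x \<and> x < 1 then place_slot (slot_of x) (\<phi> (prod_decode (slot_of x))) x else x)"

lemma glue_slot:
  assumes "slot_start m \<le> x" "x < slot_start (Suc m)"
  shows "glue \<phi> x = place_slot m (\<phi> (prod_decode m)) x"
  using assms slot_start_bounds[of m] slot_start_bounds[of "Suc m"] slot_of_eq[OF assms]
  unfolding glue_def by auto

lemma glue_fixes: "\<not> (0 \<le> x \<and> x < 1) \<Longrightarrow> glue \<phi> x = x"
  unfolding glue_def by auto

lemma glue_comp:
  assumes "\<And>q. \<phi> q \<in> thompsonF" "\<And>q. \<psi> q \<in> thompsonF"
  shows "glue \<phi> \<circ> glue \<psi> = glue (\<lambda>q. \<phi> q \<circ> \<psi> q)"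
proof
  fix x
  show "(glue \<phi> \<circ> glue \<psi>) x = glue (\<lambda>q. \<phi> q \<circ> \<psi> q) x"
  proof (cases "0 \<le> x \<and> x < 1")
    case True
    define m where "m = slot_of x"
    have m: "slot_start m \<le> x" "x < slot_start (Suc m)" using slot_of True unfolding m_def by auto
    then have "slot_start m \<le> glue \<psi> x" "glue \<psi> x < slot_start (Suc m)"
      using place_slot_maps_slot[OF assms(2)] glue_slot[OF m] by auto
    then have "glue \<phi> (glue \<psi> x) = place_slot m (\<phi> (prod_decode m)) (place_slot m (\<psi> (prod_decode m)) x)"
      using glue_slot[OF m] glue_slot by simp
    also have "\<dots> = place_slot m (\<phi> (prod_decode m) \<circ> \<psi> (prod_decode m)) x"
      unfolding place_slot_def using place_comp[OF assms(1,2) slot_len_pos] by (metis comp_apply)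
    also have "\<dots> = glue (\<lambda>q. \<phi> q \<circ> \<psi> q) x" using glue_slot[OF m] by simp
    finally show ?thesis by simp
  qed (simp add: glue_fixes)
qed

lemma glue_id [simp]: "glue (\<lambda>q. id) = id"
  unfolding glue_def place_slot_def by (auto simp: fun_eq_iff)

lemma glue_single: "glue (single q0 g) = place_slot (prod_encode q0) g"
proof
  fix x
  show "glue (single q0 g) x = place_slot (prod_encode q0) g x"
  proof (cases "0 \<le> x \<and> x < 1")
    case True
    define m where "m = slot_of x"
    have m: "slot_start m \<le> x" "x < slot_start (Suc m)" using slot_of True unfolding m_def by auto
    show ?thesis
    proof (cases "m = prod_encode q0")
      case False
      then have "Suc m \<le> prod_encode q0 \<or> Suc (prod_encode q0) \<le> m" by linarith
      then have "x < slot_start (prod_encode q0) \<or> slot_start (Suc (prod_encode q0)) \<le> x"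
        using m slot_start_le_iff[of "Suc m" "prod_encode q0"]
          slot_start_le_iff[of "Suc (prod_encode q0)" m] by linarith
      moreover have "prod_decode m \<noteq> q0" using False by auto
      ultimately show ?thesis using glue_slot[OF m] place_slot_fixes by (simp add: place_slot_def single_def)
    qed (use glue_slot[OF m] in \<open>simp add: single_def\<close>)
  next
    case False
    then have "x < slot_start (prod_encode q0) \<or> slot_start (Suc (prod_encode q0)) \<le> x"
      using slot_start_bounds[of "prod_encode q0"] slot_start_bounds[of "Suc (prod_encode q0)"] by auto
    then show ?thesis using glue_fixes[OF False] place_slot_fixes by simp
  qed
qed

lemma glue_thompsonF:
  assumes "\<phi> \<in> carrier sumF" shows "glue \<phi> \<in> thompsonF"
proof -
  have "glue \<phi> \<in> thompsonF" if "finite Q" "\<And>q. \<phi> q \<in> thompsonF" "{q. \<phi> q \<noteq> id} \<subseteq> Q" for Q \<phi>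
    using that
  proof (induction Q arbitrary: \<phi> rule: finite_induct)
    case empty
    then have "\<phi> = (\<lambda>q. id)" by blast
    then show ?case using id_thompsonF glue_id by (simp only:)
  next
    case (insert q0 Q)
    define \<phi>1 where "\<phi>1 = single q0 (\<phi> q0)"
    define \<phi>2 where "\<phi>2 = \<phi>(q0 := id)"
    have \<phi>12: "\<phi>1 q \<in> thompsonF" "\<phi>2 q \<in> thompsonF" for q
      unfolding \<phi>1_def \<phi>2_def single_def using insert.prems(1) id_thompsonF by auto
    have "{q. \<phi>2 q \<noteq> id} \<subseteq> {q. \<phi> q \<noteq> id} - {q0}" unfolding \<phi>2_def by auto
    then have "{q. \<phi>2 q \<noteq> id} \<subseteq> Q" using insert.prems(2) by blast
    then have "glue \<phi>2 \<in> thompsonF" using insert.IH[of \<phi>2] \<phi>12(2) by blast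
    moreover have "\<phi> = (\<lambda>q. \<phi>1 q \<circ> \<phi>2 q)" unfolding \<phi>1_def \<phi>2_def single_def by (auto simp: fun_eq_iff)
    then have "glue \<phi> = glue \<phi>1 \<circ> glue \<phi>2" using glue_comp[of \<phi>1 \<phi>2] \<phi>12 by simp
    moreover have "glue \<phi>1 = place_slot (prod_encode q0) (\<phi> q0)"
      unfolding \<phi>1_def by (rule glue_single)
    ultimately show ?case
      using thompsonF_comp[OF place_slot_thompsonF] insert.prems(1) by metis
  qed
  then show ?thesis using sumF_carrierD[OF assms] sumF_carrier_finite[OF assms] by blast
qed

lemma glue_inj:
  assumes "\<And>q. \<phi> q \<in> thompsonF" "\<And>q. \<psi> q \<in> thompsonF" "glue \<phi> = glue \<psi>"
  shows "\<phi> = \<psi>"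
proof (intro ext)
  fix q y
  define m where "m = prod_encode q"
  show "\<phi> q y = \<psi> q y"
  proof (cases "0 \<le> y \<and> y < 1")
    case True
    define x where "x = slot_start m + slot_len m * y"
    have x: "slot_start m \<le> x" "x < slot_start (Suc m)"
      unfolding x_def slot_start_Suc using True slot_len_pos[of m] by auto
    have "(x - slot_start m) / slot_len m = y" unfolding x_def using slot_len_pos[of m] by simp
    then have "glue h x = slot_start m + slot_len m * h q y" for h
      using glue_slot[OF x] x unfolding place_slot_def place_def slot_start_Suc m_def by simp
    from this[of \<phi>] this[of \<psi>] show ?thesis using assms(3) slot_len_pos[of m] by simp
  qed (use thompsonF_D(2)[OF assms(1)] thompsonF_D(2)[OF assms(2)] in simp)
qed

lemma glue_hom: "group_hom sumF groupF glue"
proof -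
  have "glue (\<phi> \<otimes>\<^bsub>sumF\<^esub> \<psi>) = glue \<phi> \<otimes>\<^bsub>groupF\<^esub> glue \<psi>"
    if "\<phi> \<in> carrier sumF" "\<psi> \<in> carrier sumF" for \<phi> \<psi>
    using glue_comp[of \<phi> \<psi>] sumF_carrierD[OF that(1)] sumF_carrierD[OF that(2)]
    by (simp add: sumF_mult)
  then show ?thesis
    unfolding group_hom_def group_hom_axioms_def hom_def
    using group_sumF group_groupF glue_thompsonF by auto
qed

lemma glue_inj_on: "inj_on glue (carrier sumF)"
  by (rule inj_onI) (use glue_inj sumF_carrierD in blast)

section \<open>Realising a configuration in the direct sum\<close>

definition gadget :: "nat set \<Rightarrow> (real \<Rightarrow> real) \<Rightarrow> int \<Rightarrow> (nat \<Rightarrow> int) \<Rightarrow> nat \<Rightarrow> real \<Rightarrow> real" where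
  "gadget J b k v j =
     (if j = 0 then b \<circ> x0_pow k else if j - 1 \<in> J - {Max J} then x0_pow (v (j - 1)) else id)"

lemma gadget_0 [simp]: "gadget J b k v 0 = b \<circ> x0_pow k"
  and gadget_Suc [simp]: "gadget J b k v (Suc l) = (if l \<in> J - {Max J} then x0_pow (v l) else id)"
  unfolding gadget_def by simp_all

lemma gadget_thompsonF: "b \<in> thompsonF \<Longrightarrow> gadget J b k v j \<in> thompsonF"
  unfolding gadget_def using thompsonF_comp id_thompsonF by auto

lemma gadget_support_finite:
  assumes "finite J" shows "finite {j. gadget J b k v j \<noteq> id}"
proof -
  have "j \<in> insert 0 (Suc ` J)" if "gadget J b k v j \<noteq> id" for j
    using that by (cases j) (auto split: if_splits)
  then have "{j. gadget J b k v j \<noteq> id} \<subseteq> insert 0 (Suc ` J)" by blast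
  then show ?thesis using assms by (meson finite_imageI finite_insert finite_subset)
qed

lemma gadget_mult:
  assumes "b \<in> thompsonF" "b' \<in> thompsonF"
  shows "(\<lambda>j. gadget J b k v j \<circ> gadget J b' k' v' j) =
    gadget J (b \<circ> conj_x0 k b') (k + k') (\<lambda>l. v l + v' l)"
proof
  fix j
  show "gadget J b k v j \<circ> gadget J b' k' v' j = gadget J (b \<circ> conj_x0 k b') (k + k') (\<lambda>l. v l + v' l) j"
  proof (cases j)
    case 0
    have "b \<circ> x0_pow k \<circ> (b' \<circ> x0_pow k') = b \<circ> (x0_pow k \<circ> b' \<circ> x0_pow (- k)) \<circ> (x0_pow k \<circ> x0_pow k')"
      by (simp add: comp_assoc)
    then show ?thesis using 0 unfolding conj_x0_def by (simp add: x0_pow_add)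
  qed (simp add: x0_pow_add)
qed

lemma gadget_inv:
  assumes "b \<in> thompsonF"
  shows "(\<lambda>j. fun_inv (gadget J b k v j)) = gadget J (conj_x0 (- k) (fun_inv b)) (- k) (\<lambda>l. - v l)"
proof
  fix j
  show "fun_inv (gadget J b k v j) = gadget J (conj_x0 (- k) (fun_inv b)) (- k) (\<lambda>l. - v l) j"
  proof (cases j)
    case 0
    have "fun_inv (b \<circ> x0_pow k) = x0_pow (- k) \<circ> fun_inv b"
      using o_inv_distrib[OF thompsonF_bij[OF assms] thompsonF_bij[OF x0_pow_thompsonF]] x0_pow_uminus
      by simp
    also have "\<dots> = x0_pow (- k) \<circ> fun_inv b \<circ> (x0_pow k \<circ> x0_pow (- k))" by simp
    finally show ?thesis using 0 unfolding conj_x0_def by (simp add: comp_assoc)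
  qed (simp add: x0_pow_uminus inv_id)
qed

lemma gadget_int_pow:
  "(\<lambda>j. gadget J id k v j [^]\<^bsub>groupF\<^esub> (e::int)) = gadget J id (k * e) (\<lambda>l. v l * e)"
proof
  fix j
  show "gadget J id k v j [^]\<^bsub>groupF\<^esub> e = gadget J id (k * e) (\<lambda>l. v l * e) j"
    using groupF.int_pow_one by (cases j) (auto simp: x0_pow_mult)
qed

lemma gadget_trivial: "\<forall>l\<in>J - {Max J}. v l = 0 \<Longrightarrow> gadget J id 0 v = (\<lambda>j. id)"
  unfolding gadget_def by (auto simp: fun_eq_iff)

lemma gadget_cong: "\<forall>l\<in>J - {Max J}. v l = v' l \<Longrightarrow> gadget J b k v = gadget J b k v'"
  unfolding gadget_def by (auto simp: fun_eq_iff)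

lemma gadget_eq_iff:
  assumes "b \<in> subgroupB" "b' \<in> subgroupB"
  shows "gadget J b k v = gadget J b' k' v' \<longleftrightarrow> b = b' \<and> k = k' \<and> (\<forall>l\<in>J - {Max J}. v l = v' l)"
proof
  assume eq: "gadget J b k v = gadget J b' k' v'"
  have "b \<circ> x0_pow k = b' \<circ> x0_pow k'" using fun_cong[OF eq, of 0] by simp
  then have "b = b' \<and> k = k'" using subgroupB_x0_pow_eq_iff[OF assms] by blast
  moreover have "v l = v' l" if "l \<in> J - {Max J}" for l
    using fun_cong[OF eq, of "Suc l"] that x0_pow_inj by simp
  ultimately show "b = b' \<and> k = k' \<and> (\<forall>l\<in>J - {Max J}. v l = v' l)" by blast
qed (auto simp: gadget_def fun_eq_iff)

definition block :: "nat set \<Rightarrow> (nat \<Rightarrow> real \<Rightarrow> real) \<Rightarrow> nat \<times> nat \<Rightarrow> real \<Rightarrow> real" where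
  "block J \<psi> q = (if fst q = set_encode J then \<psi> (snd q) else id)"

lemma block_carrier:
  assumes "\<And>j. \<psi> j \<in> thompsonF" "finite {j. \<psi> j \<noteq> id}"
  shows "block J \<psi> \<in> carrier sumF"
proof (rule sumF_carrierI)
  show "block J \<psi> q \<in> thompsonF" for q unfolding block_def using assms(1) id_thompsonF by auto
  have "{q. block J \<psi> q \<noteq> id} \<subseteq> (\<lambda>j. (set_encode J, j)) ` {j. \<psi> j \<noteq> id}"
    unfolding block_def by (auto split: if_splits)
  then show "finite {q. block J \<psi> q \<noteq> id}" using assms(2) by (meson finite_imageI finite_subset)
qed

lemma block_gadget_carrier: "b \<in> thompsonF \<Longrightarrow> finite J \<Longrightarrow> block J (gadget J b k v) \<in> carrier sumF"
  by (rule block_carrier) (auto intro: gadget_thompsonF gadget_support_finite)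

lemma block_mult: "block J \<psi> \<otimes>\<^bsub>sumF\<^esub> block J \<psi>' = block J (\<lambda>j. \<psi> j \<circ> \<psi>' j)"
  unfolding block_def sumF_mult by (auto simp: fun_eq_iff)

lemma block_int_pow:
  assumes "block J \<psi> \<in> carrier sumF"
  shows "block J \<psi> [^]\<^bsub>sumF\<^esub> (e::int) = block J (\<lambda>j. \<psi> j [^]\<^bsub>groupF\<^esub> e)"
proof
  fix q
  show "(block J \<psi> [^]\<^bsub>sumF\<^esub> e) q = block J (\<lambda>j. \<psi> j [^]\<^bsub>groupF\<^esub> e) q"
    using sumF_int_pow[OF assms, of e q] groupF.int_pow_one unfolding block_def by auto
qed

lemma block_id [simp]: "block J (\<lambda>j. id) = \<one>\<^bsub>sumF\<^esub>"
  unfolding block_def sumF_one by (auto simp: fun_eq_iff)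

lemma block_gadget_single: "block J (gadget J g 0 (\<lambda>l. 0)) = single (set_encode J, 0) g"
proof
  fix q
  show "block J (gadget J g 0 (\<lambda>l. 0)) q = single (set_encode J, 0) g q"
    unfolding block_def single_def by (cases q; cases "snd q") auto
qed

lemma conj_single:
  assumes "h \<in> carrier sumF" "h q0 = x0"
  shows "h [^]\<^bsub>sumF\<^esub> j \<otimes>\<^bsub>sumF\<^esub> single q0 a0 \<otimes>\<^bsub>sumF\<^esub> inv\<^bsub>sumF\<^esub> (h [^]\<^bsub>sumF\<^esub> j) =
    single q0 (a_conj j)"
proof
  fix q
  define L where "L = h [^]\<^bsub>sumF\<^esub> j"
  have L: "L \<in> carrier sumF" unfolding L_def using assms(1) by simp
  show "(L \<otimes>\<^bsub>sumF\<^esub> single q0 a0 \<otimes>\<^bsub>sumF\<^esub> inv\<^bsub>sumF\<^esub> L) q = single q0 (a_conj j) q"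
  proof (cases "q = q0")
    case True
    have "L q0 = x0_pow j" using sumF_int_pow[OF assms(1)] assms(2) unfolding L_def x0_pow_def by simp
    then show ?thesis
      using True sumF_inv[OF L] unfolding single_def a_conj_def conj_x0_def
      by (simp add: x0_pow_uminus sumF_mult)
  next
    case False
    have "L q \<circ> fun_inv (L q) = id" using sumF_carrierD[OF L] by (simp add: fun_eq_iff)
    then show ?thesis using False sumF_inv[OF L] unfolding single_def by (simp add: sumF_mult)
  qed
qed

definition translation :: "nat set \<Rightarrow> int \<Rightarrow> (nat \<Rightarrow> int) \<Rightarrow> nat \<times> nat \<Rightarrow> real \<Rightarrow> real" where
  "translation J k v = block J (gadget J id k v)"

lemma translation_mult:
  "translation J k v \<otimes>\<^bsub>sumF\<^esub> translation J k' v' = translation J (k + k') (\<lambda>l. v l + v' l)"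
  unfolding translation_def block_mult using gadget_mult[OF id_thompsonF id_thompsonF] by simp

lemma translation_int_pow:
  "finite J \<Longrightarrow> translation J k v [^]\<^bsub>sumF\<^esub> (e::int) = translation J (k * e) (\<lambda>l. v l * e)"
  unfolding translation_def
  using block_int_pow[OF block_gadget_carrier[OF id_thompsonF]] gadget_int_pow by simp

lemma translation_trivial: "\<forall>l\<in>J - {Max J}. v l = 0 \<Longrightarrow> translation J 0 v = \<one>\<^bsub>sumF\<^esub>"
  unfolding translation_def by (simp add: gadget_trivial)

lemma translation_cong:
  assumes "\<forall>l\<in>J - {Max J}. v l = v' l" shows "translation J k v = translation J k v'"
  unfolding translation_def using gadget_cong[OF assms] by simp

lemma block_gadget_split:
  assumes "b \<in> thompsonF"
  shows "block J (gadget J b k v) = single (set_encode J, 0) b \<otimes>\<^bsub>sumF\<^esub> translation J k v"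
  unfolding block_gadget_single[symmetric] translation_def block_mult
  using gadget_mult[OF assms id_thompsonF, of J 0 "\<lambda>l. 0" k v] by simp

definition gadget_cond :: "nat set \<Rightarrow> nat \<Rightarrow> int \<Rightarrow> (nat \<Rightarrow> int) \<Rightarrow> bool" where
  "gadget_cond J i k v \<longleftrightarrow> (if i = Max J then k = (\<Sum>l\<in>J - {Max J}. v l) else v i = 0)"

context
  fixes n :: nat and c :: "nat set \<Rightarrow> nat"
begin

definition one_sets :: "nat set set" where
  "one_sets = {J. J \<noteq> {} \<and> J \<subseteq> {1..n} \<and> c J = 1}"

definition admissible :: "nat set \<Rightarrow> nat set \<Rightarrow> (nat \<Rightarrow> real \<Rightarrow> real) \<Rightarrow> bool" where
  "admissible I J \<psi> \<longleftrightarrow>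
     (if J \<in> one_sets \<and> I \<subseteq> J
      then \<exists>b\<in>subgroupB. \<exists>k v. \<psi> = gadget J b k v \<and> (\<forall>i\<in>I. gadget_cond J i k v)
      else \<psi> = (\<lambda>j. id))"

definition realising_subgroup :: "nat set \<Rightarrow> (nat \<times> nat \<Rightarrow> real \<Rightarrow> real) set" where
  "realising_subgroup I =
     {\<phi> \<in> carrier sumF. \<forall>m. admissible I (set_decode m) (\<lambda>j. \<phi> (m, j))}"

lemma one_sets_finite: "finite one_sets"
  by (rule finite_subset[of _ "Pow {1..n}"]) (auto simp: one_sets_def)

lemma one_setsD: "J \<in> one_sets \<Longrightarrow> finite J \<and> J \<noteq> {}"
  unfolding one_sets_def using finite_subset by blast

lemma admissibleI:
  "J \<in> one_sets \<Longrightarrow> I \<subseteq> J \<Longrightarrow> b \<in> subgroupB \<Longrightarrow> \<forall>i\<in>I. gadget_cond J i k v \<Longrightarrow>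
    admissible I J (gadget J b k v)"
  unfolding admissible_def by auto

lemma admissible_id: "admissible I J (\<lambda>j. id)"
proof (cases "J \<in> one_sets \<and> I \<subseteq> J")
  case True
  have "gadget J id 0 (\<lambda>l. 0) = (\<lambda>j. id)" by (rule gadget_trivial) simp
  then show ?thesis
    using admissibleI[of J I id 0 "\<lambda>l. 0"] True id_subgroupB by (simp add: gadget_cond_def)
qed (auto simp: admissible_def)

lemma admissible_Int:
  assumes "I \<noteq> {}"
  shows "(\<forall>i\<in>I. admissible {i} J \<psi>) \<longleftrightarrow> admissible I J \<psi>"
proof (cases "J \<in> one_sets \<and> I \<subseteq> J")
  case True
  show ?thesis
  proof
    assume all: "\<forall>i\<in>I. admissible {i} J \<psi>"
    obtain i0 where "i0 \<in> I" using assms by blast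
    then obtain b k v where bkv: "b \<in> subgroupB" "\<psi> = gadget J b k v"
      using all True unfolding admissible_def by fastforce
    have "gadget_cond J i k v" if i: "i \<in> I" for i
    proof -
      obtain b' k' v' where "b' \<in> subgroupB" "\<psi> = gadget J b' k' v'" "gadget_cond J i k' v'"
        using all True i unfolding admissible_def by fastforce
      then have "k = k'" "\<forall>l\<in>J - {Max J}. v l = v' l" "gadget_cond J i k' v'"
        using gadget_eq_iff[OF bkv(1)] bkv(2) by auto
      then show ?thesis using i True unfolding gadget_cond_def by (auto intro: sum.cong)
    qed
    then show "admissible I J \<psi>" using True bkv by (simp add: admissibleI)
  next
    assume "admissible I J \<psi>"
    then show "\<forall>i\<in>I. admissible {i} J \<psi>" using True unfolding admissible_def by fastforce
  qed
next
  case False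
  then have "admissible I J \<psi> \<longleftrightarrow> \<psi> = (\<lambda>j. id)" unfolding admissible_def by (simp only: if_False)
  moreover have "(\<forall>i\<in>I. admissible {i} J \<psi>) \<longleftrightarrow> \<psi> = (\<lambda>j. id)"
  proof
    assume all: "\<forall>i\<in>I. admissible {i} J \<psi>"
    obtain i0 where "i0 \<in> I" "\<not> (J \<in> one_sets \<and> {i0} \<subseteq> J)" using False assms by blast
    then show "\<psi> = (\<lambda>j. id)" using all unfolding admissible_def by auto
  qed (use admissible_id in simp)
  ultimately show ?thesis by simp
qed

lemma admissible_mult:
  assumes "admissible I J \<psi>" "admissible I J \<psi>'"
  shows "admissible I J (\<lambda>j. \<psi> j \<circ> \<psi>' j)"
proof (cases "J \<in> one_sets \<and> I \<subseteq> J")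
  case True
  obtain b k v b' k' v' where b: "b \<in> subgroupB" "\<psi> = gadget J b k v" "\<forall>i\<in>I. gadget_cond J i k v"
    and b': "b' \<in> subgroupB" "\<psi>' = gadget J b' k' v'" "\<forall>i\<in>I. gadget_cond J i k' v'"
    using assms True unfolding admissible_def by auto
  have "(\<lambda>j. \<psi> j \<circ> \<psi>' j) = gadget J (b \<circ> conj_x0 k b') (k + k') (\<lambda>l. v l + v' l)"
    using gadget_mult subgroupB_thompsonF b b' by simp
  moreover have "b \<circ> conj_x0 k b' \<in> subgroupB"
    using subgroup.m_closed[OF subgroupB_subgroup b(1) conj_x0_subgroupB[OF b'(1)]] by simp
  moreover have "gadget_cond J i (k + k') (\<lambda>l. v l + v' l)" if "i \<in> I" for i
    using b(3) b'(3) that unfolding gadget_cond_def by (auto simp: sum.distrib)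
  ultimately show ?thesis using True by (simp add: admissibleI)
qed (use assms in \<open>auto simp: admissible_def\<close>)

lemma admissible_inv:
  assumes "admissible I J \<psi>"
  shows "admissible I J (\<lambda>j. fun_inv (\<psi> j))"
proof (cases "J \<in> one_sets \<and> I \<subseteq> J")
  case True
  obtain b k v where b: "b \<in> subgroupB" "\<psi> = gadget J b k v" "\<forall>i\<in>I. gadget_cond J i k v"
    using assms True unfolding admissible_def by auto
  have "(\<lambda>j. fun_inv (\<psi> j)) = gadget J (conj_x0 (- k) (fun_inv b)) (- k) (\<lambda>l. - v l)"
    using gadget_inv subgroupB_thompsonF b by simp
  moreover have "fun_inv b \<in> subgroupB"
    using subgroup.m_inv_closed[OF subgroupB_subgroup b(1)] subgroupB_thompsonF[OF b(1)] by simp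
  then have "conj_x0 (- k) (fun_inv b) \<in> subgroupB" by (rule conj_x0_subgroupB)
  moreover have "gadget_cond J i (- k) (\<lambda>l. - v l)" if "i \<in> I" for i
    using b(3) that unfolding gadget_cond_def by (auto simp: sum_negf)
  ultimately show ?thesis using True by (simp add: admissibleI)
qed (use assms in \<open>auto simp: admissible_def inv_id\<close>)

lemma realising_subgroup_Inter:
  assumes "I \<noteq> {}" shows "(\<Inter>i\<in>I. realising_subgroup {i}) = realising_subgroup I"
proof (rule equalityI; rule subsetI)
  fix \<phi> assume "\<phi> \<in> (\<Inter>i\<in>I. realising_subgroup {i})"
  then have "\<phi> \<in> carrier sumF" "\<forall>m. \<forall>i\<in>I. admissible {i} (set_decode m) (\<lambda>j. \<phi> (m, j))"
    using assms unfolding realising_subgroup_def by auto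
  then show "\<phi> \<in> realising_subgroup I"
    using admissible_Int[OF assms] unfolding realising_subgroup_def by blast
next
  fix \<phi> assume "\<phi> \<in> realising_subgroup I"
  then show "\<phi> \<in> (\<Inter>i\<in>I. realising_subgroup {i})"
    using admissible_Int[OF assms] unfolding realising_subgroup_def by blast
qed

lemma realising_subgroup_subgroup: "subgroup (realising_subgroup I) sumF"
proof
  show "realising_subgroup I \<subseteq> carrier sumF" unfolding realising_subgroup_def by auto
  show "\<one>\<^bsub>sumF\<^esub> \<in> realising_subgroup I"
    unfolding realising_subgroup_def using sumF.one_closed admissible_id by (simp add: sumF_one)
  show "x \<otimes>\<^bsub>sumF\<^esub> y \<in> realising_subgroup I"
    if "x \<in> realising_subgroup I" "y \<in> realising_subgroup I" for x y
    using that sumF.m_closed admissible_mult unfolding realising_subgroup_def by (auto simp: sumF_mult)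
  show "inv\<^bsub>sumF\<^esub> x \<in> realising_subgroup I" if "x \<in> realising_subgroup I" for x
    using that sumF.inv_closed admissible_inv sumF_inv unfolding realising_subgroup_def by auto
qed

lemma block_realising_subgroup:
  assumes "finite J" "block J \<psi> \<in> carrier sumF" "admissible I J \<psi>"
  shows "block J \<psi> \<in> realising_subgroup I"
proof -
  have "admissible I (set_decode m) (\<lambda>j. block J \<psi> (m, j))" for m
    using assms(1,3) admissible_id unfolding block_def by (cases "m = set_encode J") simp_all
  then show ?thesis using assms(2) unfolding realising_subgroup_def by blast
qed

lemma realising_subgroup_coordinate_image:
  assumes I: "I \<in> one_sets"
  shows "(\<lambda>\<phi>. \<phi> (set_encode I, 0)) ` realising_subgroup I = subgroupB"
proof
  have If: "finite I" "I \<noteq> {}" using one_setsD[OF I] by auto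
  show "(\<lambda>\<phi>. \<phi> (set_encode I, 0)) ` realising_subgroup I \<subseteq> subgroupB"
  proof
    fix y assume "y \<in> (\<lambda>\<phi>. \<phi> (set_encode I, 0)) ` realising_subgroup I"
    then obtain \<phi> where \<phi>: "\<phi> \<in> realising_subgroup I" "y = \<phi> (set_encode I, 0)" by auto
    then have "admissible I (set_decode (set_encode I)) (\<lambda>j. \<phi> (set_encode I, j))"
      unfolding realising_subgroup_def by blast
    then have "admissible I I (\<lambda>j. \<phi> (set_encode I, j))" using If by simp
    then obtain b k v where bkv: "b \<in> subgroupB" "(\<lambda>j. \<phi> (set_encode I, j)) = gadget I b k v"
      "\<forall>i\<in>I. gadget_cond I i k v"
      using I unfolding admissible_def by auto
    have "Max I \<in> I" using If by simp
    then have "k = (\<Sum>l\<in>I - {Max I}. v l)" using bkv(3) unfolding gadget_cond_def by auto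
    also have "\<dots> = 0" using bkv(3) unfolding gadget_cond_def by (intro sum.neutral) auto
    finally have "y = b" using fun_cong[OF bkv(2), of 0] \<phi>(2) by simp
    then show "y \<in> subgroupB" using bkv(1) by simp
  qed
  show "subgroupB \<subseteq> (\<lambda>\<phi>. \<phi> (set_encode I, 0)) ` realising_subgroup I"
  proof
    fix b assume b: "b \<in> subgroupB"
    have "block I (gadget I b 0 (\<lambda>l. 0)) \<in> realising_subgroup I"
      using I If b by (intro block_realising_subgroup block_gadget_carrier admissibleI subgroupB_thompsonF)
        (auto simp: gadget_cond_def)
    moreover have "block I (gadget I b 0 (\<lambda>l. 0)) (set_encode I, 0) = b" unfolding block_def by simp
    ultimately show "b \<in> (\<lambda>\<phi>. \<phi> (set_encode I, 0)) ` realising_subgroup I"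
      by (intro image_eqI[where x = "block I (gadget I b 0 (\<lambda>l. 0))"]) simp_all
  qed
qed

lemma realising_subgroup_not_fin_gen:
  assumes "I \<in> one_sets"
  shows "\<not> fin_gen_subgroup sumF (realising_subgroup I)"
proof
  assume "fin_gen_subgroup sumF (realising_subgroup I)"
  then have "fin_gen_subgroup groupF ((\<lambda>\<phi>. \<phi> (set_encode I, 0)) ` realising_subgroup I)"
    using fin_gen_subgroup_image[OF sumF_coordinate_hom subgroup.subset[OF realising_subgroup_subgroup]]
    by blast
  then show False using subgroupB_not_fin_gen realising_subgroup_coordinate_image[OF assms] by simp
qed

end

context
  fixes n :: nat and c :: "nat set \<Rightarrow> nat" and I :: "nat set"
  assumes I: "I \<noteq> {}" "I \<subseteq> {1..n}" "I \<notin> one_sets n c"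
begin

definition supersets :: "nat set set" where
  "supersets = {J \<in> one_sets n c. I \<subseteq> J}"

lemma supersetsD: "J \<in> supersets \<Longrightarrow> finite J \<and> I \<subseteq> J \<and> J \<noteq> I \<and> J \<in> one_sets n c"
  unfolding supersets_def using one_setsD I(3) by auto

lemma supersets_finite: "finite supersets"
  using one_sets_finite unfolding supersets_def by simp

text \<open>If \<open>Max J \<in> I\<close>, its condition \<open>k = \<Sum> v l\<close> forces a free generator to carry \<open>x0\<close> in
  position 0 as well.\<close>
definition shift :: "nat set \<Rightarrow> int" where
  "shift J = (if Max J \<in> I then 1 else 0)"

definition gen_free :: "nat set \<Rightarrow> nat \<Rightarrow> nat \<times> nat \<Rightarrow> real \<Rightarrow> real" where
  "gen_free J l = translation J (shift J) (\<lambda>l'. if l' = l then 1 else 0)"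

definition gen_x0 :: "nat set \<Rightarrow> nat \<times> nat \<Rightarrow> real \<Rightarrow> real" where
  "gen_x0 J = translation J 1 (\<lambda>l. 0)"

definition generators :: "(nat \<times> nat \<Rightarrow> real \<Rightarrow> real) set" where
  "generators = (\<Union>J\<in>supersets. insert (single (set_encode J, 0) a0)
     ((if Max J \<in> I then {} else {gen_x0 J}) \<union> gen_free J ` (J - {Max J} - I)))"

lemma generators_finite: "finite generators"
  unfolding generators_def using supersets_finite supersetsD by auto

lemma generators_subset: "generators \<subseteq> realising_subgroup n c I"
proof
  fix g assume "g \<in> generators"
  then obtain J where J: "J \<in> supersets" "g \<in> insert (single (set_encode J, 0) a0)
     ((if Max J \<in> I then {} else {gen_x0 J}) \<union> gen_free J ` (J - {Max J} - I))"
    unfolding generators_def by blast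
  have Jf: "finite J" "I \<subseteq> J" "J \<in> one_sets n c" using supersetsD[OF J(1)] by auto
  have block_in: "block J (gadget J b k v) \<in> realising_subgroup n c I"
    if "b \<in> subgroupB" "\<forall>i\<in>I. gadget_cond J i k v" for b k v
    using that Jf by (intro block_realising_subgroup block_gadget_carrier admissibleI subgroupB_thompsonF)
  consider "g = single (set_encode J, 0) a0" | "Max J \<notin> I" "g = gen_x0 J"
    | l where "l \<in> J - {Max J} - I" "g = gen_free J l"
    using J(2) by (auto split: if_splits)
  then show "g \<in> realising_subgroup n c I"
  proof cases
    case 1
    then show ?thesis
      using block_in[of a0 0 "\<lambda>l. 0"] a_conj_subgroupB[of 0] block_gadget_single
      by (simp add: gadget_cond_def)
  next
    case 2
    have "\<forall>i\<in>I. gadget_cond J i 1 (\<lambda>l. 0)" using 2 unfolding gadget_cond_def by auto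
    then show ?thesis using block_in id_subgroupB 2 unfolding gen_x0_def translation_def by blast
  next
    case 3
    have "gadget_cond J i (shift J) (\<lambda>l'. if l' = l then 1 else 0)" if "i \<in> I" for i
      using that 3 Jf(1) unfolding gadget_cond_def shift_def by (auto simp: sum.delta)
    then show ?thesis using block_in id_subgroupB 3 unfolding gen_free_def translation_def by blast
  qed
qed

context
  fixes Y assumes Y: "subgroup Y sumF" "generators \<subseteq> Y"
begin

lemma x0_in_block:
  assumes J: "J \<in> supersets"
  obtains h where "h \<in> Y" "h \<in> carrier sumF" "h (set_encode J, 0) = x0"
proof -
  have Jf: "finite J" "I \<subseteq> J" "J \<noteq> I" using supersetsD[OF J] by auto
  have "\<exists>h\<in>generators. h (set_encode J, 0) = x0"
  proof (cases "Max J \<in> I")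
    case True
    obtain l where "l \<in> J - {Max J} - I" using Jf True by blast
    then show ?thesis using J True unfolding generators_def gen_free_def shift_def
      by (intro bexI[of _ "gen_free J l"]) (auto simp: block_def gen_free_def shift_def translation_def)
  next
    case False
    then show ?thesis using J unfolding generators_def
      by (intro bexI[of _ "gen_x0 J"]) (auto simp: block_def gen_x0_def translation_def)
  qed
  then show ?thesis
    using that Y(2) generators_subset subgroup.subset[OF realising_subgroup_subgroup] by blast
qed

text \<open>Since \<open>J \<noteq> I\<close>, some element of \<open>Y\<close> has \<open>x0\<close> in position 0 of the \<open>J\<close>-block;
  conjugating \<open>a0\<close> by its powers yields all of B there.\<close>
lemma single_subgroupB_in:
  assumes "J \<in> supersets" "b \<in> subgroupB"
  shows "single (set_encode J, 0) b \<in> Y"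
proof -
  obtain h where h: "h \<in> Y" "h \<in> carrier sumF" "h (set_encode J, 0) = x0"
    using x0_in_block[OF assms(1)] by blast
  have "single (set_encode J, 0) a0 \<in> Y" using Y(2) assms(1) unfolding generators_def by blast
  then have "single (set_encode J, 0) (a_conj j) \<in> Y" for j
    using conj_single[OF h(2,3), of j] h(1) subgroup.m_closed[OF Y(1)] subgroup.m_inv_closed[OF Y(1)]
      sumF.subgroup_int_pow_closed[OF Y(1)] by metis
  then have "generate sumF (single (set_encode J, 0) ` range a_conj) \<subseteq> Y"
    by (intro sumF.generate_subgroup_incl[OF _ Y(1)]) auto
  moreover have "generate sumF (single (set_encode J, 0) ` range a_conj) =
      single (set_encode J, 0) ` subgroupB"
    unfolding subgroupB_def by (rule group_hom.generate_img[OF single_hom range_a_conj_carrier])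
  ultimately show ?thesis using assms(2) by blast
qed

lemma free_translations_in:
  assumes J: "J \<in> supersets" and "finite K" "K \<subseteq> J - {Max J} - I"
  shows "translation J (shift J * (\<Sum>l\<in>K. v l)) (\<lambda>l. if l \<in> K then v l else 0) \<in> Y"
  using assms(2,3)
proof (induction K rule: finite_induct)
  case empty
  then show ?case using translation_trivial subgroup.one_closed[OF Y(1)] by simp
next
  case (insert l K)
  have Jf: "finite J" using supersetsD[OF J] by blast
  have "gen_free J l \<in> Y" using J insert.prems Y(2) unfolding generators_def by blast
  then have "gen_free J l [^]\<^bsub>sumF\<^esub> v l \<otimes>\<^bsub>sumF\<^esub>
      translation J (shift J * (\<Sum>l\<in>K. v l)) (\<lambda>l. if l \<in> K then v l else 0) \<in> Y"
    using insert sumF.subgroup_int_pow_closed[OF Y(1)] subgroup.m_closed[OF Y(1)] by simp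
  moreover have "(\<lambda>l'. (if l' = l then 1 else 0) * v l + (if l' \<in> K then v l' else 0)) =
      (\<lambda>l'. if l' \<in> insert l K then v l' else 0)"
    using insert.hyps(2) by (auto simp: fun_eq_iff)
  ultimately show ?case
    unfolding gen_free_def translation_int_pow[OF Jf] translation_mult
    using insert.hyps by (simp add: distrib_left)
qed

lemma translation_in:
  assumes J: "J \<in> supersets" and cond: "\<forall>i\<in>I. gadget_cond J i k v"
  shows "translation J k v \<in> Y"
proof -
  have Jf: "finite J" "J \<noteq> {}" "I \<subseteq> J" using supersetsD[OF J] one_setsD by auto
  define K where "K = J - {Max J} - I"
  have v_K: "v l = 0" if "l \<in> J - {Max J}" "l \<notin> K" for l
    using cond that unfolding K_def gadget_cond_def by auto
  have "finite K" using Jf(1) unfolding K_def by simp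
  then have "translation J (shift J * (\<Sum>l\<in>K. v l)) (\<lambda>l. if l \<in> K then v l else 0) \<in> Y"
    using free_translations_in[OF J] unfolding K_def by blast
  moreover have "translation J (shift J * (\<Sum>l\<in>K. v l)) (\<lambda>l. if l \<in> K then v l else 0) =
      translation J (shift J * (\<Sum>l\<in>K. v l)) v"
    by (rule translation_cong) (auto simp: v_K)
  ultimately have in_Y: "translation J (shift J * (\<Sum>l\<in>K. v l)) v \<in> Y" by simp
  show ?thesis
  proof (cases "Max J \<in> I")
    case True
    have "k = (\<Sum>l\<in>J - {Max J}. v l)" using cond True unfolding gadget_cond_def by auto
    also have "\<dots> = (\<Sum>l\<in>K. v l)"
      using v_K Jf(1) by (intro sum.mono_neutral_right) (auto simp: K_def)
    finally show ?thesis using in_Y True unfolding shift_def by simp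
  next
    case False
    have "gen_x0 J \<in> generators" using J False unfolding generators_def by auto
    then have "gen_x0 J \<in> Y" using Y(2) by blast
    then have "gen_x0 J [^]\<^bsub>sumF\<^esub> k \<otimes>\<^bsub>sumF\<^esub> translation J 0 v \<in> Y"
      using in_Y False sumF.subgroup_int_pow_closed[OF Y(1)] subgroup.m_closed[OF Y(1)]
      unfolding shift_def by simp
    then show ?thesis
      unfolding gen_x0_def translation_int_pow[OF Jf(1)] translation_mult by simp
  qed
qed

lemma admissible_block_in:
  assumes J: "J \<in> supersets" and "admissible n c I J \<psi>"
  shows "block J \<psi> \<in> Y"
proof -
  obtain b k v where b: "b \<in> subgroupB" "\<psi> = gadget J b k v" "\<forall>i\<in>I. gadget_cond J i k v"
    using assms supersetsD unfolding admissible_def by auto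
  then show ?thesis
    using block_gadget_split[OF subgroupB_thompsonF[OF b(1)]] subgroup.m_closed[OF Y(1)]
      single_subgroupB_in[OF J b(1)] translation_in[OF J b(3)] by simp
qed

lemma realising_subgroup_subset: "realising_subgroup n c I \<subseteq> Y"
proof
  fix \<phi> assume \<phi>: "\<phi> \<in> realising_subgroup n c I"
  define restrict where "restrict K = (\<lambda>q. if set_decode (fst q) \<in> K then \<phi> q else id)" for K
  have "restrict K \<in> Y" if "finite K" "K \<subseteq> supersets" for K
    using that
  proof (induction K rule: finite_induct)
    case empty
    have "restrict {} = \<one>\<^bsub>sumF\<^esub>" unfolding restrict_def sumF_one by (simp add: fun_eq_iff)
    then show ?case using subgroup.one_closed[OF Y(1)] by simp
  next
    case (insert J K)
    then have J: "J \<in> supersets" and Jf: "finite J" using supersetsD by auto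
    have "admissible n c I (set_decode (set_encode J)) (\<lambda>j. \<phi> (set_encode J, j))"
      using \<phi> unfolding realising_subgroup_def by blast
    then have "block J (\<lambda>j. \<phi> (set_encode J, j)) \<in> Y"
      using admissible_block_in[OF J] Jf by simp
    moreover have "restrict (insert J K) = block J (\<lambda>j. \<phi> (set_encode J, j)) \<otimes>\<^bsub>sumF\<^esub> restrict K"
      using insert.hyps(2) Jf by (auto simp: fun_eq_iff restrict_def block_def sumF_mult)
    ultimately show ?case using insert subgroup.m_closed[OF Y(1)] by simp
  qed
  moreover have "\<phi> = restrict supersets"
  proof
    fix q :: "nat \<times> nat"
    obtain m j where q: "q = (m, j)" by (cases q)
    have "admissible n c I (set_decode m) (\<lambda>j. \<phi> (m, j))"
      using \<phi> unfolding realising_subgroup_def by blast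
    then show "\<phi> q = restrict supersets q"
    proof (cases "set_decode m \<in> supersets")
      case False
      then have "\<not> (set_decode m \<in> one_sets n c \<and> I \<subseteq> set_decode m)"
        unfolding supersets_def by blast
      then have "(\<lambda>j. \<phi> (m, j)) = (\<lambda>j. id)"
        using \<open>admissible n c I (set_decode m) (\<lambda>j. \<phi> (m, j))\<close>
        unfolding admissible_def by (simp only: if_False)
      then have "\<phi> (m, j) = id" by (rule fun_cong[where x = j, simplified])
      then show ?thesis using False unfolding restrict_def q by simp
    qed (simp add: restrict_def q)
  qed
  ultimately show "\<phi> \<in> Y" using supersets_finite by blast
qed

end

lemma realising_subgroup_fin_gen: "fin_gen_subgroup sumF (realising_subgroup n c I)"
proof -
  have carrier: "generators \<subseteq> carrier sumF"
    using generators_subset subgroup.subset[OF realising_subgroup_subgroup] by blast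
  have "realising_subgroup n c I \<subseteq> generate sumF generators"
    by (rule realising_subgroup_subset[OF sumF.generate_is_subgroup[OF carrier]])
      (auto intro: generate.incl)
  moreover have "generate sumF generators \<subseteq> realising_subgroup n c I"
    by (rule sumF.generate_subgroup_incl[OF generators_subset realising_subgroup_subgroup])
  ultimately show ?thesis
    unfolding fin_gen_subgroup_def using generators_finite carrier by blast
qed

end

lemma realisable_sumF:
  assumes "configuration n c" shows "realisable sumF n c"
  unfolding realisable_def
proof (intro exI[of _ "\<lambda>i. realising_subgroup n c {i}"] conjI ballI allI impI)
  show "subgroup (realising_subgroup n c {i}) sumF" for i by (rule realising_subgroup_subgroup)
next
  fix I assume I: "I \<noteq> {} \<and> I \<subseteq> {1..n}"
  then have "(\<Inter>i\<in>I. realising_subgroup n c {i}) = realising_subgroup n c I"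
    by (simp add: realising_subgroup_Inter)
  moreover have "c I \<in> {0, 1}" using assms I unfolding configuration_def by blast
  ultimately show "fin_gen_subgroup sumF (\<Inter>i\<in>I. realising_subgroup n c {i}) \<longleftrightarrow> c I = 0"
    using I realising_subgroup_not_fin_gen[of I n c] realising_subgroup_fin_gen[of I n c]
    unfolding one_sets_def by auto
qed

theorem corollary3p1:
  shows "intersection_saturated (fun_group thompsonF) \<and>
         intersection_saturated (fun_group thompsonT) \<and>
         intersection_saturated (fun_group thompsonV)"
proof -
  have "realisable groupF n c" if "configuration n c" for n c
    using realisable_inj_hom[OF glue_hom glue_inj_on realisable_sumF[OF that]] .
  then have "intersection_saturated groupF" unfolding intersection_saturated_def by blast
  then show ?thesis
    using intersection_saturated_fun_group_mono[OF group_groupF] thompsonF_subset_thompsonT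
      thompsonT_subset_thompsonV by blast
qed

end
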